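(* Let $\mathcal X$ be a finite multi-set of real symmetric $2\times2$ matrices satisfying the hypotheses of Lemma 7 (unique largest eigenvalue $\lambda_1$; unique second largest eigenvalue $\lambda_2$ whose eigenvector is not perpendicular to that of $\lambda_1$), and let $S=\mathrm{Sup}_{\mathrm{LE}}(\mathcal X)$. Define $\boldsymbol\varphi:\mathcal U(\mathcal X)\to\mathbb R^2$ by $\boldsymbol\varphi(Y)=(\lambda,\mu)$, where $\lambda\ge\mu$ are the eigenvalues of $Y$, and equip $\mathbb R^2$ with the lexicographic order $(a,b)\preccurlyeq(a',b')\iff a<a'\ \text{or}\ (a=a'\ \text{and}\ b\le b')$. Then: (i) $\boldsymbol\varphi$ is Loewner-monotone: $B\le_{\mathrm L}A$ implies $\boldsymbol\varphi(B)\preccurlyeq\boldsymbol\varphi(A)$ for $A,B\in\mathcal U(\mathcal X)$; (ii) $\boldsymbol\varphi$ is convex on $\mathcal U(\mathcal X)$ with respect to the order cone $K=\{x\in\mathbb R^2:x\succcurlyeq0\}$, i.e. $\alpha\boldsymbol\varphi(Y_1)+(1-\alpha)\boldsymbol\varphi(Y_2)-\boldsymbol\varphi(\alpha Y_1+(1-\alpha)Y_2)\in K$ for all $Y_1,Y_2\in\mathcal U(\mathcal X)$, $\alpha\in[0,1]$; (iii) $S$ is the unique minimiser of $\boldsymbol\varphi$ (with respect to $\preccurlyeq$) on the super-upper bound cone $\mathcal U_*(\mathcal X)$.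
   Context: $\mathrm{Sym}(2)$: real symmetric $2\times2$ matrices; $A\le_{\mathrm L}B$ means $B-A$ positive semidefinite; $\mathcal U(\mathcal X):=\{Y\in\mathrm{Sym}(2):X\le_{\mathrm L}Y\ \forall X\in\mathcal X\}$ (a convex set). $\mathrm{Sup}_{\mathrm{LE}}(\mathcal X):=\lim_{m\to\infty}\frac1m\log\sum_{X\in\mathcal X}\exp(mX)$. For positive semidefinite $Y=\lambda uu^{\mathsf T}+\mu vv^{\mathsf T}$, $Y^p:=\lambda^puu^{\mathsf T}+\mu^pvv^{\mathsf T}$. If all eigenvalues of matrices in $\mathcal X$ are nonnegative: $\mathcal X^p:=\{X^p:X\in\mathcal X\}$, $\mathcal U_p(\mathcal X):=\{Y\in\mathrm{Sym}(2)\text{ positive semidefinite}:Y^p\in\mathcal U(\mathcal X^p)\}$, and $\mathcal U_*(\mathcal X):=\bigcap_{p>0}\mathcal U_p(\mathcal X)$. If the smallest eigenvalue among the matrices of $\mathcal X$ is $-c<0$: $\mathcal U_*(\mathcal X):=\mathcal U_*(\mathcal X+c)-c$, where $\mathcal X+c:=\{X+cI:X\in\mathcal X\}$ and $\mathcal V-c:=\{Y-cI:Y\in\mathcal V\}$. Eigenvalue conventions: the eigenvalues of $\mathcal X$ form the multi-set of both eigenvalues of every matrix; unique means occurring exactly once. *)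

theory Defs
  imports "HOL-Analysis.Analysis" "HOL-Library.Multiset"
begin

type_synonym mat2 = "real^2^2"

definition sym2 :: "mat2 \<Rightarrow> bool" where
  "sym2 A \<longleftrightarrow> transpose A = A"

definition psd2 :: "mat2 \<Rightarrow> bool" where
  "psd2 A \<longleftrightarrow> sym2 A \<and> (\<forall>v. v \<bullet> (A *v v) \<ge> 0)"

definition loewner_le :: "mat2 \<Rightarrow> mat2 \<Rightarrow> bool" where
  "loewner_le A B \<longleftrightarrow> psd2 (B - A)"

definition eigenvalues2 :: "mat2 \<Rightarrow> real set" where
  "eigenvalues2 A = {l. \<exists>v. v \<noteq> 0 \<and> A *v v = l *\<^sub>R v}"

definition lmax :: "mat2 \<Rightarrow> real" where
  "lmax A = Max (eigenvalues2 A)"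

definition lmin :: "mat2 \<Rightarrow> real" where
  "lmin A = Min (eigenvalues2 A)"

definition eigs :: "mat2 multiset \<Rightarrow> real multiset" where
  "eigs XX = (\<Sum>A\<in>#XX. {#lmax A, lmin A#})"

text \<open>Spectral functional calculus for symmetric matrices:
  f(lambda u u^T + mu v v^T) = f(lambda) u u^T + f(mu) v v^T.\<close>
definition matfun :: "(real \<Rightarrow> real) \<Rightarrow> mat2 \<Rightarrow> mat2" where
  "matfun f A = (THE B. \<forall>v l. A *v v = l *\<^sub>R v \<longrightarrow> B *v v = f l *\<^sub>R v)"

definition Sup_LE :: "mat2 multiset \<Rightarrow> mat2" where
  "Sup_LE XX = lim (\<lambda>m::nat. (1 / real m) *\<^sub>R
      matfun ln (\<Sum>A\<in>#XX. matfun exp (real m *\<^sub>R A)))"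

definition UB :: "mat2 multiset \<Rightarrow> mat2 set" where
  "UB XX = {Y. sym2 Y \<and> (\<forall>A\<in>#XX. loewner_le A Y)}"

definition mpow :: "real \<Rightarrow> mat2 \<Rightarrow> mat2" where
  "mpow p Y = matfun (\<lambda>x. x powr p) Y"

definition UB_p :: "real \<Rightarrow> mat2 multiset \<Rightarrow> mat2 set" where
  "UB_p p XX = {Y. psd2 Y \<and> mpow p Y \<in> UB (image_mset (mpow p) XX)}"

definition UB_star0 :: "mat2 multiset \<Rightarrow> mat2 set" where
  "UB_star0 XX = (\<Inter>p\<in>{p. p > 0}. UB_p p XX)"

definition UB_star :: "mat2 multiset \<Rightarrow> mat2 set" where
  "UB_star XX =
     (if \<forall>l\<in>#eigs XX. l \<ge> 0 then UB_star0 XX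
      else (let c = - Min (set_mset (eigs XX)) in
            (\<lambda>Y. Y - c *\<^sub>R mat 1) ` UB_star0 (image_mset (\<lambda>A. A + c *\<^sub>R mat 1) XX)))"

definition phi :: "mat2 \<Rightarrow> real \<times> real" where
  "phi Y = (lmax Y, lmin Y)"

definition lexle :: "real \<times> real \<Rightarrow> real \<times> real \<Rightarrow> bool" where
  "lexle x y \<longleftrightarrow> fst x < fst y \<or> (fst x = fst y \<and> snd x \<le> snd y)"

definition lemma7_hyp :: "mat2 multiset \<Rightarrow> bool" where
  "lemma7_hyp XX \<longleftrightarrow>
     (\<exists>l1 l2. count (eigs XX) l1 = 1 \<and> (\<forall>l\<in>#eigs XX. l \<le> l1) \<and>
        count (eigs XX) l2 = 1 \<and> l2 < l1 \<and> (\<forall>l\<in>#eigs XX. l \<noteq> l1 \<longrightarrow> l \<le> l2) \<and>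
        (\<forall>A1\<in>#XX. \<forall>A2\<in>#XX. \<forall>u1 u2.
            u1 \<noteq> 0 \<and> A1 *v u1 = l1 *\<^sub>R u1 \<and> u2 \<noteq> 0 \<and> A2 *v u2 = l2 *\<^sub>R u2
            \<longrightarrow> u1 \<bullet> u2 \<noteq> 0))"

end

theory Submission
  imports Defs
begin

text \<open>Every symmetric \<open>2\<times>2\<close> matrix has the form \<open>spec2 u a b = a u u\<^sup>T + b u\<^sup>\<bottom> u\<^sup>\<bottom>\<^sup>T\<close>
  with \<open>u\<^sup>\<bottom> = perp u\<close>. Parts (i) and (ii) follow from the Rayleigh characterisation of the
  extreme eigenvalues: both are Loewner-monotone, \<open>lmax\<close> is convex and \<open>lmax + lmin\<close> is the
  (linear) trace.

  For (iii) let \<open>u1\<close> be the eigenvector of the simple top eigenvalue \<open>l1\<close> of \<open>\<X>\<close> and \<open>\<sigma>\<close> the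
  largest eigenvalue of \<open>\<X>\<close> with an eigenvector not parallel to \<open>u1\<close>. In the frame
  \<open>(u1, u1\<^sup>\<bottom>)\<close> the matrix \<open>\<Sum>\<^sub>X exp(m X)\<close> has an entry of order \<open>exp(m l1)\<close> at \<open>(u1, u1)\<close>
  and entries of order \<open>exp(m \<sigma>)\<close> elsewhere, the one at \<open>(u1\<^sup>\<bottom>, u1\<^sup>\<bottom>)\<close> being at least a constant
  times \<open>exp(m \<sigma>)\<close>. This pins its eigenvalues to these orders and turns its top eigenvector towards
  \<open>u1\<close>, so \<open>Sup\<^sub>L\<^sub>E(\<X>) = spec2 u1 l1 \<sigma>\<close>. After a shift making all eigenvalues nonnegative,
  this matrix is a \<open>p\<close>-upper bound for every \<open>p\<close>, because the eigenvalues of \<open>\<X>\<close> exceeding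
  \<open>\<sigma>\<close> live on the line through \<open>u1\<close>. Conversely, every \<open>Y \<in> \<U>\<^sub>*(\<X>)\<close> has \<open>lmax Y \<ge> l1\<close>; in
  case of equality \<open>Y = spec2 u1 l1 s\<close>, and comparing \<open>p\<close>-th powers along \<open>u1\<^sup>\<bottom>\<close> for
  \<open>p \<rightarrow> \<infinity>\<close> gives \<open>s \<ge> \<sigma>\<close>.\<close>

subsection \<open>Symmetric matrices in spectral form\<close>

definition perp :: "real^2 \<Rightarrow> real^2" where
  "perp u = vector [- (u$2), u$1]"

definition unit2 :: "real^2 \<Rightarrow> bool" where
  "unit2 u \<longleftrightarrow> u$1^2 + u$2^2 = 1"

definition spec2 :: "real^2 \<Rightarrow> real \<Rightarrow> real \<Rightarrow> mat2" where
  "spec2 u a b = (\<chi> i j. a * u$i * u$j + b * perp u$i * perp u$j)"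

lemma perp_component [simp]: "perp u $ 1 = - (u$2)" "perp u $ 2 = u$1"
  by (simp_all add: perp_def)

lemma inner_vec2: "(x::real^2) \<bullet> y = x$1 * y$1 + x$2 * y$2"
  by (simp add: inner_vec_def sum_2)

lemma matrix_vector_mult_component [simp]:
  "((M::mat2) *v x)$1 = M$1$1 * x$1 + M$1$2 * x$2"
  "((M::mat2) *v x)$2 = M$2$1 * x$1 + M$2$2 * x$2"
  by (simp_all add: matrix_vector_mult_def sum_2)

lemma spec2_component [simp]:
  "spec2 u a b $1$1 = a * u$1 * u$1 + b * u$2 * u$2"
  "spec2 u a b $1$2 = a * u$1 * u$2 - b * u$2 * u$1"
  "spec2 u a b $2$1 = a * u$2 * u$1 - b * u$1 * u$2"
  "spec2 u a b $2$2 = a * u$2 * u$2 + b * u$1 * u$1"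
  by (simp_all add: spec2_def)

lemma mat1_component [simp]:
  "(mat 1::mat2)$1$1 = 1" "(mat 1::mat2)$1$2 = 0" "(mat 1::mat2)$2$1 = 0" "(mat 1::mat2)$2$2 = 1"
  by (simp_all add: mat_def)

lemma vec2_eq_iff: "(x::'a^2) = y \<longleftrightarrow> x$1 = y$1 \<and> x$2 = y$2"
  by (simp add: vec_eq_iff forall_2)

lemma mat2_eq_iff:
  "(A::'a^2^2) = B \<longleftrightarrow> A$1$1 = B$1$1 \<and> A$1$2 = B$1$2 \<and> A$2$1 = B$2$1 \<and> A$2$2 = B$2$2"
  by (simp add: vec_eq_iff forall_2)

lemma sym2_iff: "sym2 A \<longleftrightarrow> A$1$2 = A$2$1"
  by (auto simp: sym2_def mat2_eq_iff transpose_def)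

lemma sym2_add: "sym2 A \<Longrightarrow> sym2 B \<Longrightarrow> sym2 (A + B)"
  and sym2_diff: "sym2 A \<Longrightarrow> sym2 B \<Longrightarrow> sym2 (A - B)"
  and sym2_scaleR: "sym2 A \<Longrightarrow> sym2 (t *\<^sub>R A)"
  by (simp_all add: sym2_iff)

lemma sym2_sum_mset: "(\<And>A. A \<in># XX \<Longrightarrow> sym2 (f A)) \<Longrightarrow> sym2 (\<Sum>A\<in>#XX. f A)"
  by (induction XX) (auto simp: sym2_iff)

lemma scaleR_matrix_vector_mult: "((t::real) *\<^sub>R (A::mat2)) *v x = t *\<^sub>R (A *v x)"
  by (simp add: vec2_eq_iff algebra_simps)

lemma add_scaleR_mat1_mult: "((A::mat2) + c *\<^sub>R mat 1) *v z = A *v z + c *\<^sub>R z"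
  by (simp add: vec2_eq_iff algebra_simps)

lemma unit2_iff_inner: "unit2 x \<longleftrightarrow> x \<bullet> x = 1"
  by (simp add: unit2_def inner_vec2 power2_eq_square)

lemma unit2_perp [simp]: "unit2 (perp u) = unit2 u"
  by (simp add: unit2_def add.commute)

lemma unit2_nonzero: "unit2 u \<Longrightarrow> u \<noteq> 0"
  by (auto simp: unit2_def vec2_eq_iff)

lemma perp_perp [simp]: "perp (perp u) = - u"
  and perp_scaleR: "perp (t *\<^sub>R u) = t *\<^sub>R perp u"
  and inner_perp_perp [simp]: "perp u \<bullet> perp w = u \<bullet> w"
  and inner_perp_self [simp]: "u \<bullet> perp u = 0" "perp u \<bullet> u = 0"
  by (simp_all add: vec2_eq_iff inner_vec2 algebra_simps)

lemma inner_perp_swap: "u \<bullet> perp w = - (perp u \<bullet> w)"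
  by (simp add: inner_vec2 algebra_simps)

lemma unit2_inner_self: "unit2 u \<Longrightarrow> u \<bullet> u = 1"
  by (simp add: unit2_iff_inner)

lemma frame_decomp: "unit2 u \<Longrightarrow> x = (u \<bullet> x) *\<^sub>R u + (perp u \<bullet> x) *\<^sub>R perp u"
  unfolding unit2_def by (simp add: vec2_eq_iff inner_vec2 power2_eq_square) algebra

lemma frame_pythagoras: "unit2 u \<Longrightarrow> (u \<bullet> x)^2 + (perp u \<bullet> x)^2 = x \<bullet> x"
  unfolding unit2_def by (simp add: inner_vec2 power2_eq_square) algebra

lemma unit2_frame_pythagoras: "unit2 u \<Longrightarrow> unit2 x \<Longrightarrow> (u \<bullet> x)^2 + (perp u \<bullet> x)^2 = 1"
  by (simp add: frame_pythagoras unit2_iff_inner)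

lemma abs_inner_unit2_le1: "unit2 w \<Longrightarrow> unit2 x \<Longrightarrow> \<bar>w \<bullet> x\<bar> \<le> 1"
proof -
  assume "unit2 w" "unit2 x"
  then have "(w \<bullet> x)^2 \<le> 1" using unit2_frame_pythagoras[of w x] by (smt (verit) zero_le_power2)
  then show ?thesis by (simp add: abs_square_le_1)
qed

lemma matrix_vector_mult_frame:
  "unit2 u \<Longrightarrow> M *v v = (u \<bullet> v) *\<^sub>R (M *v u) + (perp u \<bullet> v) *\<^sub>R (M *v perp u)"
  by (subst frame_decomp[of u v]) (simp_all add: matrix_vector_right_distrib matrix_vector_mult_scaleR)

lemma perp_inner_parallel:
  assumes u: "unit2 u" and w: "unit2 w" and par: "perp u \<bullet> w = 0"
  shows "(w \<bullet> x)^2 = (u \<bullet> x)^2" "(perp w \<bullet> x)^2 = (perp u \<bullet> x)^2" "perp u \<bullet> perp w \<noteq> 0"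
proof -
  have w_eq: "w = (u \<bullet> w) *\<^sub>R u" using frame_decomp[OF u, of w] par by simp
  have "1 = (u \<bullet> w)^2 * (u \<bullet> u)"
    using unit2_inner_self[OF w] by (subst (asm) (1 2) w_eq) (simp add: power2_eq_square)
  then have sq: "(u \<bullet> w)^2 = 1" using unit2_inner_self[OF u] by simp
  have "w \<bullet> x = (u \<bullet> w) * (u \<bullet> x)" by (subst w_eq) simp
  then show "(w \<bullet> x)^2 = (u \<bullet> x)^2" using sq by (simp add: power_mult_distrib)
  have "perp w \<bullet> x = (u \<bullet> w) * (perp u \<bullet> x)" by (subst w_eq) (simp add: perp_scaleR)
  then show "(perp w \<bullet> x)^2 = (perp u \<bullet> x)^2" using sq by (simp add: power_mult_distrib)
  show "perp u \<bullet> perp w \<noteq> 0" using sq by auto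
qed

lemma sym2_spec2: "sym2 (spec2 u a b)"
  by (simp add: sym2_iff)

lemma spec2_mult_eigvec:
  assumes "unit2 u"
  shows "spec2 u a b *v u = a *\<^sub>R u" "spec2 u a b *v perp u = b *\<^sub>R perp u"
  using assms unfolding unit2_def by (simp_all add: vec2_eq_iff power2_eq_square) algebra+

lemma spec2_mult: "spec2 u a b *v x = (a * (u \<bullet> x)) *\<^sub>R u + (b * (perp u \<bullet> x)) *\<^sub>R perp u"
  by (simp add: vec2_eq_iff inner_vec2 algebra_simps)

lemma inner_spec2_mult: "x \<bullet> (spec2 w a b *v y) = a * (w \<bullet> x) * (w \<bullet> y) + b * (perp w \<bullet> x) * (perp w \<bullet> y)"
  by (simp add: inner_vec2 algebra_simps)

lemma quadratic_form_spec2: "x \<bullet> (spec2 u a b *v x) = a * (u \<bullet> x)^2 + b * (perp u \<bullet> x)^2"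
  by (simp add: inner_vec2 power2_eq_square algebra_simps)

lemma inner_frame_spec2_mult:
  assumes "unit2 u"
  shows "u \<bullet> (spec2 u a b *v x) = a * (u \<bullet> x)" "perp u \<bullet> (spec2 u a b *v x) = b * (perp u \<bullet> x)"
  using assms unfolding unit2_def by (simp_all add: inner_vec2 power2_eq_square) algebra+

lemma spec2_diff: "spec2 u a b - spec2 u c d = spec2 u (a - c) (b - d)"
  and spec2_add: "spec2 u a b + spec2 u c d = spec2 u (a + c) (b + d)"
  and scaleR_spec2: "t *\<^sub>R spec2 u a b = spec2 u (t * a) (t * b)"
  by (simp_all add: mat2_eq_iff algebra_simps)

lemma mat1_eq_spec2: "unit2 u \<Longrightarrow> mat 1 = spec2 u 1 1"
  unfolding unit2_def by (simp add: mat2_eq_iff power2_eq_square algebra_simps)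

lemma spec2_scalar: "unit2 u \<Longrightarrow> spec2 u s s = s *\<^sub>R mat 1"
  by (simp add: mat1_eq_spec2 scaleR_spec2)

lemma spec2_shift: "unit2 u \<Longrightarrow> spec2 u a b + c *\<^sub>R mat 1 = spec2 u (a + c) (b + c)"
  by (simp add: mat1_eq_spec2 scaleR_spec2 spec2_add)

lemma sym2_eq_spec2_eigvec:
  assumes "sym2 A" "unit2 z" "A *v z = \<nu> *\<^sub>R z"
  shows "A = spec2 z \<nu> (perp z \<bullet> (A *v perp z))"
proof -
  have frame_alg: "p = vv * cc * cc + (cc * (r * cc - q * ss) - ss * (q * cc - p * ss)) * ss * ss \<and>
      q = vv * cc * ss - (cc * (r * cc - q * ss) - ss * (q * cc - p * ss)) * ss * cc \<and>
      r = vv * ss * ss + (cc * (r * cc - q * ss) - ss * (q * cc - p * ss)) * cc * cc"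
    if "cc * cc + ss * ss = 1" "p * cc + q * ss = vv * cc" "q * cc + r * ss = vv * ss"
    for cc ss p q r vv :: real
    using that by algebra
  show ?thesis
    using assms frame_alg[of "z$1" "z$2" "A$1$1" "A$2$1" \<nu> "A$2$2"]
    unfolding unit2_def sym2_iff
    by (auto simp: vec2_eq_iff mat2_eq_iff inner_vec2 power2_eq_square algebra_simps)
qed

lemma trace_spec2: "unit2 u \<Longrightarrow> spec2 u a b $1$1 + spec2 u a b $2$2 = a + b"
  unfolding unit2_def by (simp add: power2_eq_square) algebra

lemma sym2_spectral:
  assumes "sym2 A"
  obtains u l m where "unit2 u" "m \<le> l" "A = spec2 u l m"
proof -
  define p q r where "p = A$1$1" and "q = A$1$2" and "r = A$2$2"
  have q2: "A$2$1 = q" using assms by (simp add: sym2_iff q_def)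
  show ?thesis
  proof (cases "q = 0")
    case True
    show ?thesis
    proof (cases "r \<le> p")
      case True
      have A: "A = spec2 (vector [1, 0]) p r" using \<open>q = 0\<close> q2 by (simp add: mat2_eq_iff p_def q_def r_def)
      show ?thesis by (rule that[OF _ True A]) (simp add: unit2_def)
    next
      case False
      have A: "A = spec2 (vector [0, 1]) r p" using \<open>q = 0\<close> q2 by (simp add: mat2_eq_iff p_def q_def r_def)
      show ?thesis by (rule that[OF _ _ A]) (use False in \<open>simp_all add: unit2_def\<close>)
    qed
  next
    case False
    \<comment> \<open>the larger root of the characteristic polynomial, with eigenvector \<open>(q, l - p)\<close>\<close>
    define rt where "rt = sqrt (((p - r) / 2)^2 + q^2)"
    have rt: "rt^2 = ((p - r) / 2)^2 + q^2" "0 \<le> rt" unfolding rt_def by simp_all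
    define l where "l = (p + r) / 2 + rt"
    define v :: "real^2" where "v = vector [q, l - p]"
    define N where "N = sqrt (q^2 + (l - p)^2)"
    have N: "N > 0" "N^2 = q^2 + (l - p)^2" unfolding N_def using False by (simp_all add: add_pos_nonneg)
    define u where "u = (1 / N) *\<^sub>R v"
    have u: "unit2 u" unfolding unit2_def u_def v_def using N False
      by (simp add: power_divide add_divide_distrib[symmetric])
    have "(l - p) * (l - r) = rt^2 - ((p - r) / 2)^2" unfolding l_def by (simp add: power2_eq_square field_simps)
    then have "(l - p) * (l - r) = q^2" using rt(1) by simp
    then have "A *v v = l *\<^sub>R v" using q2 unfolding v_def
      by (simp add: vec2_eq_iff p_def q_def r_def power2_eq_square algebra_simps)
    then have "A *v u = l *\<^sub>R u" unfolding u_def by (simp add: matrix_vector_mult_scaleR)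
    from sym2_eq_spec2_eigvec[OF assms u this] obtain t where A: "A = spec2 u l t" by blast
    have "p + r = l + t" using trace_spec2[OF u, of l t] A by (simp add: p_def r_def)
    then have "t \<le> l" unfolding l_def using rt(2) by (smt (verit) field_sum_of_halves)
    then show ?thesis using u A that by blast
  qed
qed

lemma eigenvalues2_spec2: assumes "unit2 u" shows "eigenvalues2 (spec2 u a b) = {a, b}"
proof
  show "eigenvalues2 (spec2 u a b) \<subseteq> {a, b}"
  proof
    fix l assume "l \<in> eigenvalues2 (spec2 u a b)"
    then obtain v where v: "v \<noteq> 0" "spec2 u a b *v v = l *\<^sub>R v" by (auto simp: eigenvalues2_def)
    have "a * (u \<bullet> v) = l * (u \<bullet> v)" "b * (perp u \<bullet> v) = l * (perp u \<bullet> v)"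
      using inner_frame_spec2_mult[OF assms, of a b v] v(2) by auto
    moreover have "u \<bullet> v \<noteq> 0 \<or> perp u \<bullet> v \<noteq> 0" using frame_decomp[OF assms, of v] v(1) by auto
    ultimately show "l \<in> {a, b}" by auto
  qed
  show "{a, b} \<subseteq> eigenvalues2 (spec2 u a b)"
    using spec2_mult_eigvec[OF assms] unit2_nonzero[of u] unit2_nonzero[of "perp u"] assms
    unfolding eigenvalues2_def by auto
qed

lemma lmax_spec2: "unit2 u \<Longrightarrow> lmax (spec2 u a b) = max a b"
  and lmin_spec2: "unit2 u \<Longrightarrow> lmin (spec2 u a b) = min a b"
  by (simp_all add: lmax_def lmin_def eigenvalues2_spec2)

lemma matfun_spec2: assumes "unit2 u" shows "matfun f (spec2 u a b) = spec2 u (f a) (f b)"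
  unfolding matfun_def
proof (rule the_equality)
  show "\<forall>v l. spec2 u a b *v v = l *\<^sub>R v \<longrightarrow> spec2 u (f a) (f b) *v v = f l *\<^sub>R v"
  proof (intro allI impI)
    fix v l assume h: "spec2 u a b *v v = l *\<^sub>R v"
    have "a * (u \<bullet> v) = l * (u \<bullet> v)" "b * (perp u \<bullet> v) = l * (perp u \<bullet> v)"
      using inner_frame_spec2_mult[OF assms, of a b v] h by auto
    then have fa: "f a * (u \<bullet> v) = f l * (u \<bullet> v)" and fb: "f b * (perp u \<bullet> v) = f l * (perp u \<bullet> v)"
      by (metis mult_cancel_right)+
    have "spec2 u (f a) (f b) *v v = f l *\<^sub>R ((u \<bullet> v) *\<^sub>R u + (perp u \<bullet> v) *\<^sub>R perp u)"
      unfolding spec2_mult fa fb by (simp add: scaleR_add_right)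
    then show "spec2 u (f a) (f b) *v v = f l *\<^sub>R v" using frame_decomp[OF assms, of v] by simp
  qed
next
  fix B assume h: "\<forall>v l. spec2 u a b *v v = l *\<^sub>R v \<longrightarrow> B *v v = f l *\<^sub>R v"
  then have "B *v u = f a *\<^sub>R u" "B *v perp u = f b *\<^sub>R perp u"
    using spec2_mult_eigvec[OF assms] by blast+
  then have "B *v x = spec2 u (f a) (f b) *v x" for x
    using matrix_vector_mult_frame[OF assms, of B x] by (simp add: spec2_mult mult.commute)
  then show "B = spec2 u (f a) (f b)" by (simp add: matrix_eq)
qed

lemma mpow_spec2: "unit2 w \<Longrightarrow> mpow p (spec2 w a b) = spec2 w (a powr p) (b powr p)"
  by (simp add: mpow_def matfun_spec2)

lemma psd2_spec2_iff: assumes "unit2 u" shows "psd2 (spec2 u a b) \<longleftrightarrow> 0 \<le> a \<and> 0 \<le> b"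
proof
  assume "psd2 (spec2 u a b)"
  then have "0 \<le> u \<bullet> (spec2 u a b *v u)" "0 \<le> perp u \<bullet> (spec2 u a b *v perp u)"
    by (auto simp: psd2_def)
  then show "0 \<le> a \<and> 0 \<le> b"
    using spec2_mult_eigvec[OF assms] unit2_inner_self[OF assms] unit2_inner_self[of "perp u"] assms by simp
qed (simp add: psd2_def sym2_spec2 quadratic_form_spec2)

lemma psd2_iff_quadratic_form_le:
  "sym2 A \<Longrightarrow> sym2 B \<Longrightarrow> psd2 (A - B) \<longleftrightarrow> (\<forall>x. x \<bullet> (B *v x) \<le> x \<bullet> (A *v x))"
  by (simp add: psd2_def sym2_diff matrix_vector_mult_diff_rdistrib inner_diff_right)

lemma loewner_le_quadratic_form: "loewner_le B A \<Longrightarrow> x \<bullet> (B *v x) \<le> x \<bullet> (A *v x)"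
  by (auto simp: loewner_le_def psd2_def matrix_vector_mult_diff_rdistrib inner_diff_right)

lemma psd2_kernel: assumes "psd2 D" "x \<bullet> (D *v x) = 0" shows "D *v x = 0"
proof -
  obtain w a b where w: "unit2 w" "D = spec2 w a b"
    using sym2_spectral assms(1) psd2_def by metis
  have "0 \<le> a" "0 \<le> b" using assms(1) w psd2_spec2_iff by auto
  moreover have "a * (w \<bullet> x)^2 + b * (perp w \<bullet> x)^2 = 0" using assms(2) w(2) quadratic_form_spec2 by simp
  ultimately have "a * (w \<bullet> x)^2 = 0" "b * (perp w \<bullet> x)^2 = 0"
    by (smt (verit) zero_le_power2 mult_nonneg_nonneg)+
  then have "a * (w \<bullet> x) = 0" "b * (perp w \<bullet> x) = 0" by (auto simp: power2_eq_square)
  then show ?thesis unfolding w(2) spec2_mult by auto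
qed

lemma mpow_one_psd2: assumes "psd2 Y" shows "mpow 1 Y = Y"
proof -
  obtain w a b where w: "unit2 w" "b \<le> a" "Y = spec2 w a b"
    using assms sym2_spectral unfolding psd2_def by blast
  then show ?thesis using assms by (simp add: mpow_spec2 psd2_spec2_iff)
qed

subsection \<open>Extreme eigenvalues\<close>

lemma rayleigh_bounds:
  assumes "sym2 A" "unit2 x"
  shows "lmin A \<le> x \<bullet> (A *v x)" "x \<bullet> (A *v x) \<le> lmax A"
proof -
  obtain u l m where u: "unit2 u" "m \<le> l" "A = spec2 u l m" using sym2_spectral[OF assms(1)] .
  have s: "(u \<bullet> x)^2 + (perp u \<bullet> x)^2 = 1" using unit2_frame_pythagoras[OF u(1) assms(2)] .
  have "m * ((u \<bullet> x)^2 + (perp u \<bullet> x)^2) \<le> l * (u \<bullet> x)^2 + m * (perp u \<bullet> x)^2"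
    "l * (u \<bullet> x)^2 + m * (perp u \<bullet> x)^2 \<le> l * ((u \<bullet> x)^2 + (perp u \<bullet> x)^2)"
    using u(2) by (simp_all add: distrib_left mult_right_mono)
  then show "lmin A \<le> x \<bullet> (A *v x)" "x \<bullet> (A *v x) \<le> lmax A"
    using u s by (simp_all add: quadratic_form_spec2 lmax_spec2 lmin_spec2)
qed

lemma lmax_attained:
  assumes "sym2 A" obtains u where "unit2 u" "u \<bullet> (A *v u) = lmax A"
proof -
  obtain u l m where u: "unit2 u" "m \<le> l" "A = spec2 u l m" using sym2_spectral[OF assms] .
  then show ?thesis
    using that[of u] spec2_mult_eigvec[OF u(1)] unit2_inner_self[OF u(1)] by (simp add: lmax_spec2)
qed

lemma lmin_attained:
  assumes "sym2 A" obtains u where "unit2 u" "u \<bullet> (A *v u) = lmin A"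
proof -
  obtain u l m where u: "unit2 u" "m \<le> l" "A = spec2 u l m" using sym2_spectral[OF assms] .
  then show ?thesis
    using that[of "perp u"] spec2_mult_eigvec[OF u(1)] unit2_inner_self[of "perp u"]
    by (simp add: lmin_spec2)
qed

lemma lmax_plus_lmin: assumes "sym2 A" shows "lmax A + lmin A = A$1$1 + A$2$2"
proof -
  obtain u l m where u: "unit2 u" "m \<le> l" "A = spec2 u l m" using sym2_spectral[OF assms] .
  then show ?thesis using trace_spec2[OF u(1), of l m] by (simp add: lmax_spec2 lmin_spec2)
qed

lemma phi_loewner_mono:
  assumes "sym2 A" "sym2 B" "loewner_le B A" shows "lexle (phi B) (phi A)"
proof -
  obtain u where u: "unit2 u" "u \<bullet> (B *v u) = lmax B" using lmax_attained[OF assms(2)] .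
  obtain w where w: "unit2 w" "w \<bullet> (A *v w) = lmin A" using lmin_attained[OF assms(1)] .
  have "lmax B \<le> lmax A"
    using u loewner_le_quadratic_form[OF assms(3), of u] rayleigh_bounds(2)[OF assms(1) u(1)] by linarith
  moreover have "lmin B \<le> lmin A"
    using w loewner_le_quadratic_form[OF assms(3), of w] rayleigh_bounds(1)[OF assms(2) w(1)] by linarith
  ultimately show ?thesis by (auto simp: lexle_def phi_def)
qed

text \<open>The defect has the form \<open>(d, -d)\<close> with \<open>d \<ge> 0\<close>: \<open>lmax\<close> is convex and \<open>lmax + lmin\<close> is
  the trace, which is linear.\<close>
lemma phi_lex_convex:
  assumes "sym2 Y1" "sym2 Y2" "0 \<le> \<alpha>" "\<alpha> \<le> 1"
  shows "lexle (0, 0) (\<alpha> *\<^sub>R phi Y1 + (1 - \<alpha>) *\<^sub>R phi Y2 - phi (\<alpha> *\<^sub>R Y1 + (1 - \<alpha>) *\<^sub>R Y2))"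
proof -
  let ?Y = "\<alpha> *\<^sub>R Y1 + (1 - \<alpha>) *\<^sub>R Y2"
  have Y: "sym2 ?Y" using assms by (simp add: sym2_add sym2_scaleR)
  obtain u where u: "unit2 u" "u \<bullet> (?Y *v u) = lmax ?Y" using lmax_attained[OF Y] .
  have "u \<bullet> (?Y *v u) = \<alpha> * (u \<bullet> (Y1 *v u)) + (1 - \<alpha>) * (u \<bullet> (Y2 *v u))"
    by (simp add: matrix_vector_mult_add_rdistrib inner_add_right scaleR_matrix_vector_mult)
  also have "\<dots> \<le> \<alpha> * lmax Y1 + (1 - \<alpha>) * lmax Y2"
    using rayleigh_bounds(2)[OF assms(1) u(1)] rayleigh_bounds(2)[OF assms(2) u(1)] assms(3,4)
    by (intro add_mono mult_left_mono) auto
  finally have "lmax ?Y \<le> \<alpha> * lmax Y1 + (1 - \<alpha>) * lmax Y2" using u(2) by simp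
  moreover have "lmax ?Y + lmin ?Y = \<alpha> * (lmax Y1 + lmin Y1) + (1 - \<alpha>) * (lmax Y2 + lmin Y2)"
    using lmax_plus_lmin[OF Y] lmax_plus_lmin[OF assms(1)] lmax_plus_lmin[OF assms(2)]
    by (simp add: algebra_simps)
  ultimately show ?thesis by (auto simp: lexle_def phi_def algebra_simps)
qed

lemma loewner_le_trans:
  "sym2 A \<Longrightarrow> sym2 B \<Longrightarrow> sym2 C \<Longrightarrow> loewner_le A B \<Longrightarrow> loewner_le B C \<Longrightarrow> loewner_le A C"
  unfolding loewner_le_def by (meson order_trans psd2_iff_quadratic_form_le)

lemma loewner_le_spec2_same_frame:
  "unit2 u \<Longrightarrow> a \<le> c \<Longrightarrow> b \<le> d \<Longrightarrow> loewner_le (spec2 u a b) (spec2 u c d)"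
  by (simp add: loewner_le_def spec2_diff psd2_spec2_iff)

lemma spec2_parallel:
  assumes "unit2 u" "unit2 w" "perp u \<bullet> w = 0" shows "spec2 w a b = spec2 u a b"
proof -
  define k where "k = u \<bullet> w"
  have w_eq: "w = k *\<^sub>R u" using frame_decomp[OF assms(1), of w] assms(3) by (simp add: k_def)
  have "k^2 = 1" using perp_inner_parallel(1)[OF assms, of w] assms(2) by (simp add: unit2_iff_inner k_def)
  then have kk: "k * (k * z) = z" for z by (simp add: power2_eq_square mult.assoc[symmetric])
  show ?thesis unfolding w_eq by (simp add: mat2_eq_iff algebra_simps kk)
qed

lemma spec2_perp: "spec2 (perp w) b a = spec2 w a b"
  by (simp add: mat2_eq_iff algebra_simps)

text \<open>The hypotheses say that an eigenvalue of \<open>spec2 w \<alpha> \<beta>\<close> can exceed \<open>\<sigma>\<close> only if its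
  eigenvector is parallel to \<open>u\<close>.\<close>
lemma loewner_le_spec2_mono_fun:
  fixes f :: "real \<Rightarrow> real"
  assumes u: "unit2 u" and w: "unit2 w" and f: "mono_on {0..} f"
    and \<sigma>: "0 \<le> \<sigma>" "\<sigma> \<le> l" and \<alpha>: "0 \<le> \<alpha>" "\<alpha> \<le> l" and \<beta>: "0 \<le> \<beta>" "\<beta> \<le> l"
    and \<alpha>\<sigma>: "perp u \<bullet> w \<noteq> 0 \<longrightarrow> \<alpha> \<le> \<sigma>" and \<beta>\<sigma>: "perp u \<bullet> perp w \<noteq> 0 \<longrightarrow> \<beta> \<le> \<sigma>"
  shows "loewner_le (spec2 w (f \<alpha>) (f \<beta>)) (spec2 u (f l) (f \<sigma>))"
proof -
  have fle: "f x \<le> f y" if "0 \<le> x" "x \<le> y" for x y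
    using that by (intro mono_onD[OF f]) simp_all
  consider "\<alpha> \<le> \<sigma>" "\<beta> \<le> \<sigma>" | "perp u \<bullet> w = 0" "\<beta> \<le> \<sigma>" | "perp u \<bullet> perp w = 0" "\<alpha> \<le> \<sigma>"
  proof -
    have "perp u \<bullet> w = 0 \<Longrightarrow> perp u \<bullet> perp w \<noteq> 0"
      using perp_inner_parallel(3)[OF u w] .
    moreover have "perp u \<bullet> perp w = 0 \<Longrightarrow> perp u \<bullet> w \<noteq> 0"
      using perp_inner_parallel(3)[OF u, of "perp w"] w by auto
    ultimately show thesis using that \<alpha>\<sigma> \<beta>\<sigma> by (meson not_le)
  qed
  then show ?thesis
  proof cases
    case 1
    have "loewner_le (spec2 w (f \<alpha>) (f \<beta>)) (spec2 w (f \<sigma>) (f \<sigma>))"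
      using 1 \<alpha> \<beta> by (intro loewner_le_spec2_same_frame w fle)
    moreover have "spec2 w (f \<sigma>) (f \<sigma>) = spec2 u (f \<sigma>) (f \<sigma>)"
      by (simp add: spec2_scalar[OF u] spec2_scalar[OF w])
    moreover have "loewner_le (spec2 u (f \<sigma>) (f \<sigma>)) (spec2 u (f l) (f \<sigma>))"
      using \<sigma> by (intro loewner_le_spec2_same_frame u fle) auto
    ultimately show ?thesis using loewner_le_trans sym2_spec2 by metis
  next
    case 2
    have "loewner_le (spec2 u (f \<alpha>) (f \<beta>)) (spec2 u (f l) (f \<sigma>))"
      using 2 \<alpha> \<beta> by (intro loewner_le_spec2_same_frame u fle)
    then show ?thesis using spec2_parallel[OF u w 2(1)] by simp
  next
    case 3
    have "loewner_le (spec2 u (f \<beta>) (f \<alpha>)) (spec2 u (f l) (f \<sigma>))"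
      using 3 \<alpha> \<beta> by (intro loewner_le_spec2_same_frame u fle)
    then show ?thesis using spec2_parallel[OF u _ 3(1)] w spec2_perp[of w] by simp
  qed
qed

lemma eigenvalue_lmax_or_lmin:
  assumes "sym2 A" "unit2 z" "A *v z = \<nu> *\<^sub>R z" shows "\<nu> = lmax A \<or> \<nu> = lmin A"
proof -
  obtain w a b where w: "unit2 w" "b \<le> a" "A = spec2 w a b" using sym2_spectral[OF assms(1)] .
  have "\<nu> \<in> eigenvalues2 A" using assms(2,3) unit2_nonzero[OF assms(2)] by (auto simp: eigenvalues2_def)
  then show ?thesis using w by (auto simp: eigenvalues2_spec2 lmax_spec2 lmin_spec2)
qed

lemma eigs_add_mset [simp]: "eigs (add_mset A XX) = {#lmax A, lmin A#} + eigs XX"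
  by (simp add: eigs_def)

lemma lmax_lmin_in_eigs: "A \<in># XX \<Longrightarrow> lmax A \<in># eigs XX \<and> lmin A \<in># eigs XX"
  by (induction XX) auto

lemma eigs_memberE:
  assumes "l \<in># eigs XX" obtains A where "A \<in># XX" "l = lmax A \<or> l = lmin A"
proof -
  have "\<exists>A\<in>#XX. l = lmax A \<or> l = lmin A" using assms by (induction XX) (auto simp: eigs_def)
  then show ?thesis using that by blast
qed

lemma eigenvalue_in_eigs:
  "\<forall>A\<in>#XX. sym2 A \<Longrightarrow> A \<in># XX \<Longrightarrow> unit2 z \<Longrightarrow> A *v z = \<nu> *\<^sub>R z \<Longrightarrow> \<nu> \<in># eigs XX"
  using eigenvalue_lmax_or_lmin lmax_lmin_in_eigs by metis

lemma eigs_shift: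
  assumes "\<forall>A\<in>#XX. sym2 A"
  shows "eigs (image_mset (\<lambda>A. A + c *\<^sub>R mat 1) XX) = image_mset (\<lambda>l. l + c) (eigs XX)"
  using assms
proof (induction XX)
  case (add A XX)
  have "sym2 A" using add.prems by simp
  then obtain w a b where w: "unit2 w" "b \<le> a" "A = spec2 w a b" by (rule sym2_spectral)
  have "lmax (A + c *\<^sub>R mat 1) = lmax A + c" "lmin (A + c *\<^sub>R mat 1) = lmin A + c"
    using w by (simp_all add: spec2_shift lmax_spec2 lmin_spec2)
  then show ?case using add by simp
qed (simp add: eigs_def)

definition phi_unique_minimiser :: "mat2 \<Rightarrow> mat2 set \<Rightarrow> bool" where
  "phi_unique_minimiser S U \<longleftrightarrow> S \<in> U \<and> (\<forall>Y\<in>U. lexle (phi S) (phi Y))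
     \<and> (\<forall>Y\<in>U. lexle (phi Y) (phi S) \<longrightarrow> Y = S)"

lemma phi_shift:
  assumes "sym2 Y" shows "phi (Y - c *\<^sub>R mat 1) = phi Y - (c, c)"
proof -
  obtain w a b where w: "unit2 w" "b \<le> a" "Y = spec2 w a b" using sym2_spectral[OF assms] .
  then have "Y - c *\<^sub>R mat 1 = spec2 w (a - c) (b - c)"
    by (simp add: mat1_eq_spec2 scaleR_spec2 spec2_diff)
  then show ?thesis using w by (simp add: phi_def lmax_spec2 lmin_spec2)
qed

lemma phi_unique_minimiser_shift:
  assumes "\<forall>Y\<in>U. sym2 Y" "phi_unique_minimiser S U"
  shows "phi_unique_minimiser (S - c *\<^sub>R mat 1) ((\<lambda>Y. Y - c *\<^sub>R mat 1) ` U)"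
proof -
  have "lexle (phi (Y - c *\<^sub>R mat 1)) (phi (Z - c *\<^sub>R mat 1)) \<longleftrightarrow> lexle (phi Y) (phi Z)"
    if "Y \<in> U" "Z \<in> U" for Y Z
    using assms(1) that by (simp add: phi_shift lexle_def)
  then show ?thesis using assms(2) unfolding phi_unique_minimiser_def by auto
qed

subsection \<open>Asymptotics of spectral forms\<close>

lemma member_le_sum_mset:
  fixes g :: "'a \<Rightarrow> real"
  assumes "\<And>A. A \<in># XX \<Longrightarrow> 0 \<le> g A" "A0 \<in># XX"
  shows "g A0 \<le> (\<Sum>A\<in>#XX. g A)"
proof -
  obtain XX' where XX: "XX = add_mset A0 XX'" using assms(2) by (metis multi_member_split)
  have "(\<Sum>A\<in>#XX'. 0) \<le> (\<Sum>A\<in>#XX'. g A)" by (rule sum_mset_mono) (use assms(1) XX in auto)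
  then show ?thesis using XX by simp
qed

lemma abs_sum_mset_le:
  fixes g :: "'a \<Rightarrow> real"
  assumes "\<And>A. A \<in># XX \<Longrightarrow> \<bar>g A\<bar> \<le> K"
  shows "\<bar>\<Sum>A\<in>#XX. g A\<bar> \<le> real (size XX) * K"
proof -
  have "(\<Sum>A\<in>#XX. - K) \<le> (\<Sum>A\<in>#XX. g A)"
    by (rule sum_mset_mono) (metis abs_le_iff assms minus_le_iff)
  moreover have "(\<Sum>A\<in>#XX. g A) \<le> (\<Sum>A\<in>#XX. K)"
    by (rule sum_mset_mono) (use assms in \<open>auto simp: abs_le_iff\<close>)
  ultimately show ?thesis by (simp add: abs_le_iff)
qed

lemma inner_sum_mset_mult:
  "x \<bullet> ((\<Sum>A\<in>#XX. f A) *v y) = (\<Sum>A\<in>#XX. x \<bullet> ((f A :: mat2) *v y))"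
  by (induction XX) (simp_all add: matrix_vector_mult_add_rdistrib inner_add_right)

lemma spec2_frame_coordinates:
  assumes "unit2 u"
  shows "u \<bullet> (spec2 v A B *v u) = A * (u \<bullet> v)^2 + B * (perp u \<bullet> v)^2"
    "u \<bullet> (spec2 v A B *v perp u) = (A - B) * (u \<bullet> v) * (perp u \<bullet> v)"
    "perp u \<bullet> (spec2 v A B *v perp u) = A * (perp u \<bullet> v)^2 + B * (u \<bullet> v)^2"
  by (simp_all add: inner_spec2_mult inner_perp_swap[of v u] inner_commute power2_eq_square algebra_simps)

text \<open>The hypotheses bound the entries of \<open>spec2 v LA LB\<close> in a frame \<open>(u, perp u)\<close>, written as in
  \<open>spec2_frame_coordinates\<close> with \<open>x = u \<bullet> v\<close>, \<open>y = perp u \<bullet> v\<close>: order \<open>e\<close> at \<open>(u, u)\<close> and order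
  \<open>e r\<close> elsewhere, \<open>r\<close> small. The determinant then forces \<open>LB\<close> to be of order \<open>e r\<close>.\<close>
lemma spec2_perturbation_eigenvalues:
  fixes e r n c LA LB x y :: real
  assumes e: "0 < e" and c: "0 < c" and n: "1 \<le> n" and r: "0 \<le> r" "r \<le> c / (8 * n^2)" "r \<le> 1 / (4 * n)"
    and LB: "LB \<le> LA" and xy: "x^2 + y^2 = 1"
    and a: "e \<le> LA * x^2 + LB * y^2" "LA * x^2 + LB * y^2 \<le> n * e"
    and b: "\<bar>(LA - LB) * x * y\<bar> \<le> 2 * n * (e * r)"
    and d: "c * (e * r) \<le> LA * y^2 + LB * x^2" "LA * y^2 + LB * x^2 \<le> 2 * n * (e * r)"
  shows "e \<le> LA" "LA \<le> 2 * n * e" "c / (4 * n) * (e * r) \<le> LB" "LB \<le> 2 * n * (e * r)"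
proof -
  have "LA * x^2 + LB * y^2 = LA - (LA - LB) * y^2" "LA * y^2 + LB * x^2 = LB + (LA - LB) * y^2"
    using xy by algebra+
  then have "LA * x^2 + LB * y^2 \<le> LA" "LB \<le> LA * y^2 + LB * x^2" using LB by simp_all
  then show LA: "e \<le> LA" and "LB \<le> 2 * n * (e * r)" using a d by linarith+
  have er: "0 \<le> e * r" "2 * n * (e * r) \<le> e / 2"
    using e r n by (simp_all add: field_simps)
  have det: "(LA * x^2 + LB * y^2) * (LA * y^2 + LB * x^2) - ((LA - LB) * x * y)^2 = LA * LB"
    using xy by algebra
  have "((LA - LB) * x * y)^2 \<le> (2 * n * (e * r))^2"
    using b by (metis abs_ge_zero power2_abs power_mono)
  also have "\<dots> = 4 * n^2 * (e * r) * (e * r)" by (simp add: power2_eq_square)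
  also have "\<dots> \<le> 4 * n^2 * (e * r) * (e * (c / (8 * n^2)))"
    using r e er(1) by (intro mult_left_mono) auto
  also have "\<dots> = e * (c * (e * r)) / 2" using n by (simp add: field_simps power2_eq_square)
  finally have b2: "((LA - LB) * x * y)^2 \<le> e * (c * (e * r)) / 2" .
  have "e * (c * (e * r)) \<le> (LA * x^2 + LB * y^2) * (LA * y^2 + LB * x^2)"
    using a(1) d(1) e c er(1) by (intro mult_mono) auto
  then have prod: "e * (c * (e * r)) / 2 \<le> LA * LB" using det b2 by linarith
  have "0 \<le> e * (c * (e * r)) / 2" using e c er(1) by simp
  then have prod0: "0 \<le> LA * LB" using prod by linarith
  then have LB0: "0 \<le> LB" using LA e by (simp add: zero_le_mult_iff)
  have "(LA * x^2 + LB * y^2) + (LA * y^2 + LB * x^2) = LA + LB"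
    using xy by algebra
  moreover have "e \<le> n * e" "2 * n * e = 2 * (n * e)" using n e by simp_all
  ultimately show LA': "LA \<le> 2 * n * e" using a(2) d(2) er(2) LB0 e by linarith
  have "c / (4 * n) * (e * r) = (e * (c * (e * r)) / 2) / (2 * n * e)" using e n by (simp add: field_simps)
  also have "\<dots> \<le> LA * LB / LA"
    using prod prod0 LA LA' e n by (intro frac_le) auto
  also have "\<dots> = LB" using LA e by simp
  finally show "c / (4 * n) * (e * r) \<le> LB" .
qed

text \<open>In the same coordinates: the eigenvector \<open>v\<close> tilts away from \<open>u\<close> by at most the
  off-diagonal entry divided by the gap between \<open>LA\<close> and the diagonal entry at \<open>(perp u, perp u)\<close>.\<close>
lemma spec2_tilt_bound:
  fixes LA LB x y g :: real
  assumes xy: "x^2 + y^2 = 1" and g: "0 \<le> g" "g \<le> LA - (LA * y^2 + LB * x^2)"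
  shows "\<bar>y\<bar> * g \<le> \<bar>(LA - LB) * x * y\<bar>"
proof -
  have yg: "y * (LA - (LA * y^2 + LB * x^2)) = x * ((LA - LB) * x * y)" using xy by algebra
  have "x^2 \<le> 1" using xy by (smt (verit) zero_le_power2)
  then have x: "\<bar>x\<bar> \<le> 1" by (simp add: abs_square_le_1)
  have "\<bar>y\<bar> * g \<le> \<bar>y\<bar> * (LA - (LA * y^2 + LB * x^2))" using g by (intro mult_left_mono) auto
  also have "\<dots> = \<bar>y * (LA - (LA * y^2 + LB * x^2))\<bar>" using g by (simp add: abs_mult)
  also have "\<dots> = \<bar>x\<bar> * \<bar>(LA - LB) * x * y\<bar>" unfolding yg by (rule abs_mult)
  also have "\<dots> \<le> \<bar>(LA - LB) * x * y\<bar>" using x by (simp add: mult_left_le_one_le)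
  finally show ?thesis .
qed

lemma tendsto_ln_div_of_exp_bounds:
  assumes bounds: "eventually (\<lambda>m. K1 * exp (real m * L) \<le> f m \<and> f m \<le> K2 * exp (real m * L)) sequentially"
    and K1: "0 < K1"
  shows "(\<lambda>m. ln (f m) / real m) \<longlonglongrightarrow> L"
proof (rule tendsto_sandwich[of "\<lambda>m. L + ln K1 / real m" _ _ "\<lambda>m. L + ln K2 / real m"])
  have ev: "eventually (\<lambda>m. (K1 * exp (real m * L) \<le> f m \<and> f m \<le> K2 * exp (real m * L)) \<and> 1 \<le> m) sequentially"
    using bounds eventually_ge_at_top by (rule eventually_conj)
  show "eventually (\<lambda>m. L + ln K1 / real m \<le> ln (f m) / real m) sequentially"
  proof (rule eventually_mono[OF ev])
    fix m :: nat assume h: "(K1 * exp (real m * L) \<le> f m \<and> f m \<le> K2 * exp (real m * L)) \<and> 1 \<le> m"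
    have "ln (K1 * exp (real m * L)) \<le> ln (f m)" using h K1 by (intro ln_mono) auto
    then have "ln K1 + real m * L \<le> ln (f m)" using K1 by (simp add: ln_mult)
    then have "(ln K1 + real m * L) / real m \<le> ln (f m) / real m" by (rule divide_right_mono) simp
    moreover have "L + ln K1 / real m = (ln K1 + real m * L) / real m" using h by (simp add: field_simps)
    ultimately show "L + ln K1 / real m \<le> ln (f m) / real m" by simp
  qed
  show "eventually (\<lambda>m. ln (f m) / real m \<le> L + ln K2 / real m) sequentially"
  proof (rule eventually_mono[OF ev])
    fix m :: nat assume h: "(K1 * exp (real m * L) \<le> f m \<and> f m \<le> K2 * exp (real m * L)) \<and> 1 \<le> m"
    have f: "0 < f m" using h K1 by (smt (verit) exp_gt_zero mult_pos_pos)
    then have K2: "0 < K2" using h by (smt (verit) exp_gt_zero mult_nonpos_nonneg)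
    have "ln (f m) \<le> ln (K2 * exp (real m * L))" using h f by (intro ln_mono) auto
    then have "ln (f m) \<le> ln K2 + real m * L" using K2 by (simp add: ln_mult)
    then have "ln (f m) / real m \<le> (ln K2 + real m * L) / real m" by (rule divide_right_mono) simp
    moreover have "L + ln K2 / real m = (ln K2 + real m * L) / real m" using h by (simp add: field_simps)
    ultimately show "ln (f m) / real m \<le> L + ln K2 / real m" by simp
  qed
  show "(\<lambda>m. L + ln K1 / real m) \<longlonglongrightarrow> L" "(\<lambda>m. L + ln K2 / real m) \<longlonglongrightarrow> L"
    using tendsto_add[OF tendsto_const lim_const_over_n, of L] by simp_all
qed

lemma tendsto_component_products:
  fixes a b :: "real^'n"
  assumes x2: "(\<lambda>m. (x m)^2) \<longlonglongrightarrow> 1" and xy: "(\<lambda>m. x m * y m) \<longlonglongrightarrow> 0" and y2: "(\<lambda>m. (y m)^2) \<longlonglongrightarrow> 0"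
    and w: "\<And>m. w m = x m *\<^sub>R a + y m *\<^sub>R b"
  shows "(\<lambda>m. w m $ i * w m $ j) \<longlonglongrightarrow> a $ i * a $ j"
proof -
  have "w m $ i * w m $ j = (x m)^2 * (a$i * a$j) + (x m * y m) * (a$i * b$j + b$i * a$j) + (y m)^2 * (b$i * b$j)"
    for m by (simp add: w power2_eq_square algebra_simps)
  moreover have "(\<lambda>m. (x m)^2 * (a$i * a$j) + (x m * y m) * (a$i * b$j + b$i * a$j) + (y m)^2 * (b$i * b$j))
      \<longlonglongrightarrow> 1 * (a$i * a$j) + 0 * (a$i * b$j + b$i * a$j) + 0 * (b$i * b$j)"
    by (intro tendsto_intros x2 xy y2)
  ultimately show ?thesis by simp
qed

text \<open>\<open>spec2 v a b\<close> depends on \<open>v\<close> only through the projector \<open>v v\<^sup>T\<close>, so the eigenvectors \<open>V m\<close>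
  need only approach the line through \<open>u\<close>, not \<open>u\<close> itself.\<close>
lemma spec2_tendsto:
  assumes u: "unit2 u" and V: "\<And>m. unit2 (V m)" and y0: "(\<lambda>m. perp u \<bullet> V m) \<longlonglongrightarrow> 0"
    and P: "P \<longlonglongrightarrow> p" and Q: "Q \<longlonglongrightarrow> q"
  shows "(\<lambda>m. spec2 (V m) (P m) (Q m)) \<longlonglongrightarrow> spec2 u p q"
proof -
  define x where "x = (\<lambda>m. u \<bullet> V m)"
  define y where "y = (\<lambda>m. perp u \<bullet> V m)"
  have y: "y \<longlonglongrightarrow> 0" using y0 by (simp add: y_def)
  have x_le: "\<bar>x m\<bar> \<le> 1" for m unfolding x_def by (rule abs_inner_unit2_le1[OF u V])
  have y2: "(\<lambda>m. (y m)^2) \<longlonglongrightarrow> 0" using tendsto_power[OF y, of 2] by simp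
  have x2: "(\<lambda>m. (x m)^2) \<longlonglongrightarrow> 1"
  proof -
    have "(\<lambda>m. 1 - (y m)^2) \<longlonglongrightarrow> 1 - 0" by (intro tendsto_intros y2)
    moreover have "(x m)^2 = 1 - (y m)^2" for m
      using unit2_frame_pythagoras[OF u V] unfolding x_def y_def by (simp add: algebra_simps)
    ultimately show ?thesis by simp
  qed
  have xy: "(\<lambda>m. x m * y m) \<longlonglongrightarrow> 0"
  proof (rule Lim_null_comparison)
    show "eventually (\<lambda>m. norm (x m * y m) \<le> \<bar>y m\<bar>) sequentially"
      using x_le by (intro always_eventually) (simp add: abs_mult mult_left_le_one_le)
    show "(\<lambda>m. \<bar>y m\<bar>) \<longlonglongrightarrow> 0" using tendsto_rabs_zero[OF y] .
  qed
  have V_eq: "V m = x m *\<^sub>R u + y m *\<^sub>R perp u" for m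
    unfolding x_def y_def by (rule frame_decomp[OF u])
  have VV: "(\<lambda>m. V m $ i * V m $ j) \<longlonglongrightarrow> u $ i * u $ j" for i j
    by (rule tendsto_component_products[OF x2 xy y2 V_eq])
  have PP: "(\<lambda>m. perp (V m) $ i * perp (V m) $ j) \<longlonglongrightarrow> perp u $ i * perp u $ j" for i j
    by (rule tendsto_component_products[OF x2 xy y2, where b = "- u"]) (simp add: V_eq vec2_eq_iff)
  show ?thesis
  proof (intro vec_tendstoI)
    fix i j :: 2
    have "(\<lambda>m. P m * (V m $ i * V m $ j) + Q m * (perp (V m) $ i * perp (V m) $ j))
        \<longlonglongrightarrow> p * (u $ i * u $ j) + q * (perp u $ i * perp u $ j)"
      by (intro tendsto_intros P Q VV PP)
    then show "(\<lambda>m. spec2 (V m) (P m) (Q m) $ i $ j) \<longlonglongrightarrow> spec2 u p q $ i $ j"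
      by (simp add: spec2_def mult.assoc)
  qed
qed

subsection \<open>A dominant eigenvector\<close>

locale dominant_eigenvector =
  fixes XX :: "mat2 multiset" and u1 :: "real^2" and l1 \<sigma> :: real
  assumes sym: "\<forall>A\<in>#XX. sym2 A"
    and unit_u1: "unit2 u1"
    and top_eigvec: "\<exists>A\<in>#XX. A *v u1 = l1 *\<^sub>R u1"
    and eigenvalue_bound: "\<And>A z \<nu>. A \<in># XX \<Longrightarrow> unit2 z \<Longrightarrow> A *v z = \<nu> *\<^sub>R z \<Longrightarrow>
                             \<nu> \<le> l1 \<and> (perp u1 \<bullet> z \<noteq> 0 \<longrightarrow> \<nu> \<le> \<sigma>)"
    and sigma_attained: "\<exists>A\<in>#XX. \<exists>z. unit2 z \<and> A *v z = \<sigma> *\<^sub>R z \<and> perp u1 \<bullet> z \<noteq> 0"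
    and sigma_less: "\<sigma> < l1"
begin

lemma top_eigvec_member: obtains \<mu> where "spec2 u1 l1 \<mu> \<in># XX"
  using top_eigvec sym sym2_eq_spec2_eigvec[OF _ unit_u1] by metis

lemma sigma_attained_member: obtains z \<beta> where "spec2 z \<sigma> \<beta> \<in># XX" "unit2 z" "perp u1 \<bullet> z \<noteq> 0"
  using sigma_attained sym sym2_eq_spec2_eigvec by metis

lemma member_spectral_bounds:
  assumes "A \<in># XX"
  obtains w \<alpha> \<beta> where "unit2 w" "A = spec2 w \<alpha> \<beta>" "\<alpha> \<le> l1" "\<beta> \<le> l1"
    "perp u1 \<bullet> w \<noteq> 0 \<longrightarrow> \<alpha> \<le> \<sigma>" "perp u1 \<bullet> perp w \<noteq> 0 \<longrightarrow> \<beta> \<le> \<sigma>"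
proof -
  obtain w \<alpha> \<beta> where w: "unit2 w" "A = spec2 w \<alpha> \<beta>"
    using sym2_spectral sym assms by metis
  show ?thesis
    using that[OF w] eigenvalue_bound[OF assms w(1)] eigenvalue_bound[OF assms, of "perp w"] w
      spec2_mult_eigvec[OF w(1)] by auto
qed

lemma shift:
  "dominant_eigenvector (image_mset (\<lambda>A. A + c *\<^sub>R mat 1) XX) u1 (l1 + c) (\<sigma> + c)"
proof
  have shift_eigvec: "(A + c *\<^sub>R mat 1) *v z = (\<nu> + c) *\<^sub>R z \<longleftrightarrow> A *v z = \<nu> *\<^sub>R z"
    for A :: mat2 and z :: "real^2" and \<nu> :: real
    by (simp add: add_scaleR_mat1_mult scaleR_add_left)
  show "\<forall>A\<in>#image_mset (\<lambda>A. A + c *\<^sub>R mat 1) XX. sym2 A" using sym by (auto simp: sym2_iff)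
  show "unit2 u1" by (rule unit_u1)
  show "\<exists>A\<in>#image_mset (\<lambda>A. A + c *\<^sub>R mat 1) XX. A *v u1 = (l1 + c) *\<^sub>R u1"
    using top_eigvec shift_eigvec by auto
  show "\<exists>A\<in>#image_mset (\<lambda>A. A + c *\<^sub>R mat 1) XX. \<exists>z. unit2 z \<and> A *v z = (\<sigma> + c) *\<^sub>R z \<and> perp u1 \<bullet> z \<noteq> 0"
    using sigma_attained shift_eigvec by auto
  show "\<sigma> + c < l1 + c" using sigma_less by simp
  fix A z \<nu> assume A: "A \<in># image_mset (\<lambda>A. A + c *\<^sub>R mat 1) XX" "unit2 z" "A *v z = \<nu> *\<^sub>R z"
  then obtain B where "B \<in># XX" "B *v z = (\<nu> - c) *\<^sub>R z" using shift_eigvec[of _ z "\<nu> - c"] by auto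
  then show "\<nu> \<le> l1 + c \<and> (perp u1 \<bullet> z \<noteq> 0 \<longrightarrow> \<nu> \<le> \<sigma> + c)"
    using eigenvalue_bound A(2) by fastforce
qed

lemma UB_star0_psd2: assumes "Y \<in> UB_star0 XX" shows "psd2 Y"
proof -
  have "Y \<in> UB_p 1 XX" using assms by (simp add: UB_star0_def)
  then show ?thesis by (simp add: UB_p_def)
qed

context
  assumes nonneg: "\<forall>l\<in>#eigs XX. 0 \<le> l"
begin

lemma eigenvalue_nonneg: "A \<in># XX \<Longrightarrow> unit2 z \<Longrightarrow> A *v z = \<nu> *\<^sub>R z \<Longrightarrow> 0 \<le> \<nu>"
  using eigenvalue_in_eigs[OF sym] nonneg by blast

lemma sigma_nonneg: "0 \<le> \<sigma>"
  using sigma_attained eigenvalue_nonneg by blast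

lemma member_psd2: assumes "spec2 w \<alpha> \<beta> \<in># XX" "unit2 w" shows "0 \<le> \<alpha>" "0 \<le> \<beta>"
  using eigenvalue_nonneg[OF assms(1) assms(2)] eigenvalue_nonneg[OF assms(1), of "perp w"]
    spec2_mult_eigvec[OF assms(2)] assms(2) by auto

lemma spec2_top_in_UB_star0: "spec2 u1 l1 \<sigma> \<in> UB_star0 XX"
  unfolding UB_star0_def
proof (intro InterI, clarsimp)
  fix p :: real assume p: "0 < p"
  have mono: "mono_on {0..} (\<lambda>x::real. x powr p)"
    using p by (intro mono_onI powr_mono2) auto
  have "loewner_le (mpow p A) (mpow p (spec2 u1 l1 \<sigma>))" if A: "A \<in># XX" for A
  proof -
    obtain w \<alpha> \<beta> where w: "unit2 w" "A = spec2 w \<alpha> \<beta>" "\<alpha> \<le> l1" "\<beta> \<le> l1"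
      "perp u1 \<bullet> w \<noteq> 0 \<longrightarrow> \<alpha> \<le> \<sigma>" "perp u1 \<bullet> perp w \<noteq> 0 \<longrightarrow> \<beta> \<le> \<sigma>"
      using member_spectral_bounds[OF A] .
    have "0 \<le> \<alpha>" "0 \<le> \<beta>" using member_psd2 A w(1,2) by auto
    then show ?thesis unfolding w(2) mpow_spec2[OF w(1)] mpow_spec2[OF unit_u1]
      using loewner_le_spec2_mono_fun[OF unit_u1 w(1) mono sigma_nonneg] w sigma_less by simp
  qed
  moreover have "psd2 (spec2 u1 l1 \<sigma>)"
    using psd2_spec2_iff[OF unit_u1] sigma_nonneg sigma_less by simp
  ultimately show "spec2 u1 l1 \<sigma> \<in> UB_p p XX"
    by (simp add: UB_p_def UB_def mpow_spec2[OF unit_u1] sym2_spec2)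
qed

lemma UB_star0_lmax:
  assumes "Y \<in> UB_star0 XX"
  shows "l1 \<le> lmax Y" "lmax Y = l1 \<Longrightarrow> Y = spec2 u1 l1 (lmin Y)"
proof -
  obtain \<mu> where A1: "spec2 u1 l1 \<mu> \<in># XX" by (rule top_eigvec_member)
  have Y: "psd2 Y" using UB_star0_psd2[OF assms] .
  then have symY: "sym2 Y" by (simp add: psd2_def)
  have "Y \<in> UB_p 1 XX" using assms by (simp add: UB_star0_def)
  then have "loewner_le (mpow 1 (spec2 u1 l1 \<mu>)) (mpow 1 Y)" using A1 by (simp add: UB_p_def UB_def)
  moreover have "psd2 (spec2 u1 l1 \<mu>)" using member_psd2[OF A1 unit_u1] psd2_spec2_iff[OF unit_u1] by simp
  ultimately have L: "loewner_le (spec2 u1 l1 \<mu>) Y" using Y by (simp add: mpow_one_psd2)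
  have A1u: "u1 \<bullet> (spec2 u1 l1 \<mu> *v u1) = l1"
    using spec2_mult_eigvec[OF unit_u1] unit2_inner_self[OF unit_u1] by simp
  have le: "l1 \<le> u1 \<bullet> (Y *v u1)" "u1 \<bullet> (Y *v u1) \<le> lmax Y"
    using loewner_le_quadratic_form[OF L, of u1] A1u rayleigh_bounds(2)[OF symY unit_u1] by simp_all
  then show "l1 \<le> lmax Y" by linarith
  assume "lmax Y = l1"
  \<comment> \<open>then \<open>u1\<close> lies in the kernel of the positive semidefinite \<open>Y - A1\<close>\<close>
  then have "u1 \<bullet> ((Y - spec2 u1 l1 \<mu>) *v u1) = 0"
    using le A1u by (simp add: matrix_vector_mult_diff_rdistrib inner_diff_right)
  then have "(Y - spec2 u1 l1 \<mu>) *v u1 = 0" using L psd2_kernel by (simp add: loewner_le_def)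
  then have "Y *v u1 = l1 *\<^sub>R u1"
    using spec2_mult_eigvec(1)[OF unit_u1] by (simp add: matrix_vector_mult_diff_rdistrib)
  then obtain t where Yt: "Y = spec2 u1 l1 t" using sym2_eq_spec2_eigvec[OF symY unit_u1] by blast
  then have "t \<le> l1" using \<open>lmax Y = l1\<close> by (simp add: lmax_spec2[OF unit_u1])
  then show "Y = spec2 u1 l1 (lmin Y)" using Yt by (simp add: lmin_spec2[OF unit_u1])
qed

text \<open>If \<open>s < \<sigma>\<close>, the \<open>p\<close>-th powers violate the Loewner bound along \<open>perp u1\<close> for large \<open>p\<close>:
  there the witness contributes \<open>\<sigma>\<^sup>p (z \<bullet> perp u1)\<^sup>2\<close>, while \<open>Y\<^sup>p\<close> gives only \<open>s\<^sup>p\<close>.\<close>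
lemma UB_star0_lmin:
  assumes Y: "spec2 u1 l1 s \<in> UB_star0 XX" shows "\<sigma> \<le> s"
proof (rule ccontr)
  assume "\<not> \<sigma> \<le> s"
  then have s\<sigma>: "s < \<sigma>" by simp
  have s0: "0 \<le> s" using UB_star0_psd2[OF Y] psd2_spec2_iff[OF unit_u1] by simp
  obtain z \<beta> where A: "spec2 z \<sigma> \<beta> \<in># XX" "unit2 z" "perp u1 \<bullet> z \<noteq> 0"
    by (rule sigma_attained_member)
  define c where "c = (z \<bullet> perp u1)^2"
  have c: "0 < c" using A(3) by (simp add: c_def inner_commute)
  have pw: "x powr real n = x^n" if "0 \<le> x" "1 \<le> n" for x :: real and n
    using that by (cases "x = 0") (simp_all add: powr_realpow)
  have bound: "\<sigma>^n * c \<le> s^n" if n: "1 \<le> n" for n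
  proof -
    have "loewner_le (mpow n (spec2 z \<sigma> \<beta>)) (mpow n (spec2 u1 l1 s))"
      using Y A(1) n by (simp add: UB_star0_def UB_p_def UB_def)
    then have L: "loewner_le (spec2 z (\<sigma> powr n) (\<beta> powr n)) (spec2 u1 (l1 powr n) (s powr n))"
      by (simp add: mpow_spec2[OF A(2)] mpow_spec2[OF unit_u1])
    have "\<sigma> powr n * c \<le> perp u1 \<bullet> (spec2 z (\<sigma> powr n) (\<beta> powr n) *v perp u1)"
      unfolding quadratic_form_spec2 c_def by (simp add: inner_commute)
    also have "\<dots> \<le> s powr n"
      using loewner_le_quadratic_form[OF L, of "perp u1"] spec2_mult_eigvec[OF unit_u1]
        unit2_inner_self[of "perp u1"] unit_u1 by simp
    finally show ?thesis using pw[OF s0 n] pw[OF sigma_nonneg n] by simp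
  qed
  have "(\<lambda>n. (s / \<sigma>)^n) \<longlonglongrightarrow> 0" using s\<sigma> s0 by (intro LIMSEQ_power_zero) simp
  then have "eventually (\<lambda>n. (s / \<sigma>)^n < c) sequentially" using c by (rule order_tendstoD)
  then obtain N where N: "\<And>n. N \<le> n \<Longrightarrow> (s / \<sigma>)^n < c" unfolding eventually_sequentially by blast
  have "\<sigma>^(max N 1) * c \<le> s^(max N 1)" by (rule bound) simp
  then have "c \<le> (s / \<sigma>)^(max N 1)" using s\<sigma> s0 by (simp add: field_simps)
  then show False using N[of "max N 1"] by simp
qed

lemma phi_unique_minimiser_UB_star0: "phi_unique_minimiser (spec2 u1 l1 \<sigma>) (UB_star0 XX)"
  unfolding phi_unique_minimiser_def
proof (intro conjI ballI impI)
  show "spec2 u1 l1 \<sigma> \<in> UB_star0 XX" by (rule spec2_top_in_UB_star0)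
  have phiS: "phi (spec2 u1 l1 \<sigma>) = (l1, \<sigma>)"
    using sigma_less by (simp add: phi_def lmax_spec2[OF unit_u1] lmin_spec2[OF unit_u1])
  fix Y assume Y: "Y \<in> UB_star0 XX"
  show "lexle (phi (spec2 u1 l1 \<sigma>)) (phi Y)"
  proof (cases "lmax Y = l1")
    case True
    then show ?thesis using UB_star0_lmax(2)[OF Y] UB_star0_lmin[of "lmin Y"] Y phiS
      by (simp add: lexle_def phi_def)
  next
    case False
    then show ?thesis using UB_star0_lmax(1)[OF Y] phiS by (simp add: lexle_def phi_def)
  qed
  assume "lexle (phi Y) (phi (spec2 u1 l1 \<sigma>))"
  then have "lmax Y = l1" "lmin Y \<le> \<sigma>"
    using UB_star0_lmax(1)[OF Y] phiS by (auto simp: lexle_def phi_def)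
  then show "Y = spec2 u1 l1 \<sigma>"
    using UB_star0_lmax(2)[OF Y] UB_star0_lmin[of "lmin Y"] Y by fastforce
qed

end

definition expsum :: "real \<Rightarrow> mat2" where
  "expsum t = (\<Sum>A\<in>#XX. matfun exp (t *\<^sub>R A))"

lemma sym2_expsum: "sym2 (expsum t)"
  unfolding expsum_def
proof (rule sym2_sum_mset)
  fix A assume "A \<in># XX"
  then obtain w \<alpha> \<beta> where "unit2 w" "A = spec2 w \<alpha> \<beta>" by (rule member_spectral_bounds)
  then show "sym2 (matfun exp (t *\<^sub>R A))" by (simp add: scaleR_spec2 matfun_spec2 sym2_spec2)
qed

lemma exp_term_bounds:
  assumes A: "A \<in># XX" and x: "unit2 x" and t: "0 \<le> t"
  defines "T \<equiv> matfun exp (t *\<^sub>R A)"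
  shows "0 \<le> u1 \<bullet> (T *v u1)" "u1 \<bullet> (T *v u1) \<le> exp (t * l1)"
    "0 \<le> perp u1 \<bullet> (T *v perp u1)" "\<bar>x \<bullet> (T *v perp u1)\<bar> \<le> 2 * exp (t * \<sigma>)"
proof -
  obtain w \<alpha> \<beta> where w: "unit2 w" "A = spec2 w \<alpha> \<beta>" "\<alpha> \<le> l1" "\<beta> \<le> l1"
    "perp u1 \<bullet> w \<noteq> 0 \<longrightarrow> \<alpha> \<le> \<sigma>" "perp u1 \<bullet> perp w \<noteq> 0 \<longrightarrow> \<beta> \<le> \<sigma>"
    using member_spectral_bounds[OF A] .
  have T: "T = spec2 w (exp (t * \<alpha>)) (exp (t * \<beta>))"
    unfolding T_def w(2) scaleR_spec2 matfun_spec2[OF w(1)] ..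
  have "0 \<le> (perp w \<bullet> u1)^2" by simp
  then show "0 \<le> u1 \<bullet> (T *v u1)" "0 \<le> perp u1 \<bullet> (T *v perp u1)"
    unfolding T quadratic_form_spec2 by simp_all
  have "exp (t * \<alpha>) \<le> exp (t * l1)" "exp (t * \<beta>) \<le> exp (t * l1)"
    using w(3,4) t by (simp_all add: mult_left_mono)
  then have "u1 \<bullet> (T *v u1) \<le> exp (t * l1) * ((w \<bullet> u1)^2 + (perp w \<bullet> u1)^2)"
    unfolding T quadratic_form_spec2 distrib_left by (intro add_mono mult_right_mono) auto
  then show "u1 \<bullet> (T *v u1) \<le> exp (t * l1)"
    using unit2_frame_pythagoras[OF w(1) unit_u1] by simp
  have entry: "\<bar>exp (t * \<gamma>) * (v \<bullet> x) * (v \<bullet> perp u1)\<bar> \<le> exp (t * \<sigma>)"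
    if v: "unit2 v" and \<gamma>: "perp u1 \<bullet> v \<noteq> 0 \<longrightarrow> \<gamma> \<le> \<sigma>" for v \<gamma>
  proof (cases "v \<bullet> perp u1 = 0")
    case False
    then have "exp (t * \<gamma>) \<le> exp (t * \<sigma>)" using \<gamma> t by (simp add: inner_commute mult_left_mono)
    moreover have "\<bar>(v \<bullet> x) * (v \<bullet> perp u1)\<bar> \<le> 1"
      using abs_inner_unit2_le1[OF v x] abs_inner_unit2_le1[OF v, of "perp u1"] unit_u1
      by (simp add: abs_mult mult_le_one)
    ultimately have "exp (t * \<gamma>) * \<bar>(v \<bullet> x) * (v \<bullet> perp u1)\<bar> \<le> exp (t * \<sigma>) * 1"
      by (intro mult_mono) auto
    then show ?thesis by (simp add: abs_mult mult.assoc)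
  qed simp
  have "x \<bullet> (T *v perp u1) = exp (t * \<alpha>) * (w \<bullet> x) * (w \<bullet> perp u1)
      + exp (t * \<beta>) * (perp w \<bullet> x) * (perp w \<bullet> perp u1)"
    unfolding T inner_spec2_mult ..
  then show "\<bar>x \<bullet> (T *v perp u1)\<bar> \<le> 2 * exp (t * \<sigma>)"
    using entry[OF w(1) w(5)] entry[of "perp w" \<beta>] w(1,6) by simp
qed

lemma one_le_size: "1 \<le> size XX"
  using top_eigvec by (cases XX) auto

lemma expsum_frame_bounds:
  obtains c where "0 < c"
    "\<And>t. 0 \<le> t \<Longrightarrow> exp (t * l1) \<le> u1 \<bullet> (expsum t *v u1)"
    "\<And>t. 0 \<le> t \<Longrightarrow> u1 \<bullet> (expsum t *v u1) \<le> real (size XX) * exp (t * l1)"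
    "\<And>t. 0 \<le> t \<Longrightarrow> \<bar>u1 \<bullet> (expsum t *v perp u1)\<bar> \<le> 2 * real (size XX) * exp (t * \<sigma>)"
    "\<And>t. 0 \<le> t \<Longrightarrow> c * exp (t * \<sigma>) \<le> perp u1 \<bullet> (expsum t *v perp u1)"
    "\<And>t. 0 \<le> t \<Longrightarrow> perp u1 \<bullet> (expsum t *v perp u1) \<le> 2 * real (size XX) * exp (t * \<sigma>)"
proof -
  obtain z \<beta> where Z: "spec2 z \<sigma> \<beta> \<in># XX" "unit2 z" "perp u1 \<bullet> z \<noteq> 0"
    by (rule sigma_attained_member)
  obtain \<mu> where A1: "spec2 u1 l1 \<mu> \<in># XX" by (rule top_eigvec_member)
  define c where "c = (z \<bullet> perp u1)^2"
  show ?thesis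
  proof (rule that)
    show "0 < c" using Z(3) by (simp add: c_def inner_commute)
    fix t :: real assume t: "0 \<le> t"
    note bounds = exp_term_bounds[OF _ _ t]
    have "exp (t * l1) = u1 \<bullet> (matfun exp (t *\<^sub>R spec2 u1 l1 \<mu>) *v u1)"
      by (simp add: scaleR_spec2 matfun_spec2[OF unit_u1] spec2_mult_eigvec[OF unit_u1] unit2_inner_self[OF unit_u1])
    also have "\<dots> \<le> u1 \<bullet> (expsum t *v u1)"
      unfolding expsum_def inner_sum_mset_mult
      by (rule member_le_sum_mset[OF _ A1]) (rule bounds(1)[OF _ unit_u1])
    finally show "exp (t * l1) \<le> u1 \<bullet> (expsum t *v u1)" .
    have "\<bar>u1 \<bullet> (expsum t *v u1)\<bar> \<le> real (size XX) * exp (t * l1)"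
      unfolding expsum_def inner_sum_mset_mult
      by (rule abs_sum_mset_le) (use bounds(1,2)[OF _ unit_u1] in fastforce)
    then show "u1 \<bullet> (expsum t *v u1) \<le> real (size XX) * exp (t * l1)" by simp
    have off: "\<bar>x \<bullet> (expsum t *v perp u1)\<bar> \<le> 2 * real (size XX) * exp (t * \<sigma>)" if "unit2 x" for x
      unfolding expsum_def inner_sum_mset_mult using abs_sum_mset_le[OF bounds(4)[OF _ that]]
      by (simp add: mult.commute mult.left_commute)
    show "\<bar>u1 \<bullet> (expsum t *v perp u1)\<bar> \<le> 2 * real (size XX) * exp (t * \<sigma>)" by (rule off[OF unit_u1])
    show "perp u1 \<bullet> (expsum t *v perp u1) \<le> 2 * real (size XX) * exp (t * \<sigma>)"
      using off[of "perp u1"] unit_u1 by (simp add: abs_le_iff)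
    have "c * exp (t * \<sigma>) \<le> perp u1 \<bullet> (matfun exp (t *\<^sub>R spec2 z \<sigma> \<beta>) *v perp u1)"
      by (simp add: scaleR_spec2 matfun_spec2[OF Z(2)] quadratic_form_spec2 c_def inner_commute)
    also have "\<dots> \<le> perp u1 \<bullet> (expsum t *v perp u1)"
      unfolding expsum_def inner_sum_mset_mult
      by (rule member_le_sum_mset[OF _ Z(1)]) (rule bounds(3)[OF _ unit_u1])
    finally show "c * exp (t * \<sigma>) \<le> perp u1 \<bullet> (expsum t *v perp u1)" .
  qed
qed

lemma expsum_spectral_asymptotics:
  obtains n c \<rho> where "1 \<le> n" "0 < c" "0 < \<rho>"
    "\<And>t v LA LB. 0 \<le> t \<Longrightarrow> exp (t * (\<sigma> - l1)) < \<rho> \<Longrightarrow> unit2 v \<Longrightarrow> LB \<le> LA \<Longrightarrow>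
       expsum t = spec2 v LA LB \<Longrightarrow>
       exp (t * l1) \<le> LA \<and> LA \<le> 2 * n * exp (t * l1) \<and>
       c / (4 * n) * exp (t * \<sigma>) \<le> LB \<and> LB \<le> 2 * n * exp (t * \<sigma>) \<and>
       \<bar>perp u1 \<bullet> v\<bar> \<le> 4 * n * exp (t * (\<sigma> - l1))"
proof -
  obtain c where c: "0 < c"
    and entries: "\<And>t. 0 \<le> t \<Longrightarrow> exp (t * l1) \<le> u1 \<bullet> (expsum t *v u1)"
      "\<And>t. 0 \<le> t \<Longrightarrow> u1 \<bullet> (expsum t *v u1) \<le> real (size XX) * exp (t * l1)"
      "\<And>t. 0 \<le> t \<Longrightarrow> \<bar>u1 \<bullet> (expsum t *v perp u1)\<bar> \<le> 2 * real (size XX) * exp (t * \<sigma>)"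
      "\<And>t. 0 \<le> t \<Longrightarrow> c * exp (t * \<sigma>) \<le> perp u1 \<bullet> (expsum t *v perp u1)"
      "\<And>t. 0 \<le> t \<Longrightarrow> perp u1 \<bullet> (expsum t *v perp u1) \<le> 2 * real (size XX) * exp (t * \<sigma>)"
    using expsum_frame_bounds by blast
  define n where "n = real (size XX)"
  have n: "1 \<le> n" using one_le_size by (simp add: n_def)
  define \<rho> where "\<rho> = min (c / (8 * n^2)) (1 / (4 * n))"
  have "0 < \<rho>" using c n by (simp add: \<rho>_def)
  moreover have "exp (t * l1) \<le> LA \<and> LA \<le> 2 * n * exp (t * l1) \<and>
       c / (4 * n) * exp (t * \<sigma>) \<le> LB \<and> LB \<le> 2 * n * exp (t * \<sigma>) \<and>
       \<bar>perp u1 \<bullet> v\<bar> \<le> 4 * n * exp (t * (\<sigma> - l1))"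
    if t: "0 \<le> t" and r: "exp (t * (\<sigma> - l1)) < \<rho>" and v: "unit2 v" and LB: "LB \<le> LA"
      and M: "expsum t = spec2 v LA LB" for t v LA LB
  proof -
    define e r where "e = exp (t * l1)" and "r = exp (t * (\<sigma> - l1))"
    have er: "e * r = exp (t * \<sigma>)" unfolding e_def r_def by (simp flip: exp_add add: algebra_simps)
    have e: "0 < e" and r: "0 \<le> r" "r \<le> c / (8 * n^2)" "r \<le> 1 / (4 * n)"
      using that(2) by (simp_all add: e_def r_def \<rho>_def)
    have xy: "(u1 \<bullet> v)^2 + (perp u1 \<bullet> v)^2 = 1" by (rule unit2_frame_pythagoras[OF unit_u1 v])
    note frame = entries[OF t, unfolded M spec2_frame_coordinates[OF unit_u1] n_def[symmetric],
        folded e_def er]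
    have eig: "e \<le> LA" "LA \<le> 2 * n * e" "c / (4 * n) * (e * r) \<le> LB" "LB \<le> 2 * n * (e * r)"
      using spec2_perturbation_eigenvalues[OF e c n r LB xy frame] by (simp_all add: mult.assoc)
    have "2 * n * (e * r) \<le> e / 2" using e r n by (simp add: field_simps)
    then have "e / 2 \<le> LA - (LA * (perp u1 \<bullet> v)^2 + LB * (u1 \<bullet> v)^2)"
      using eig(1) frame(5) by (simp add: mult.assoc)
    then have "\<bar>perp u1 \<bullet> v\<bar> * (e / 2) \<le> \<bar>(LA - LB) * (u1 \<bullet> v) * (perp u1 \<bullet> v)\<bar>"
      using e by (intro spec2_tilt_bound[OF xy]) auto
    also have "\<dots> \<le> 2 * n * (e * r)" using frame(3) by (simp add: mult.assoc)
    finally have "\<bar>perp u1 \<bullet> v\<bar> * (e / 2) \<le> 2 * n * (e * r)" .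
    then have "\<bar>perp u1 \<bullet> v\<bar> \<le> 4 * n * r" using e by (simp add: field_simps)
    with eig show ?thesis unfolding er by (simp add: e_def r_def)
  qed
  ultimately show ?thesis using that n c by blast
qed

lemma Sup_LE_eq: "Sup_LE XX = spec2 u1 l1 \<sigma>"
proof -
  obtain n c \<rho> where n: "1 \<le> n" and c: "0 < c" and \<rho>: "0 < \<rho>" and asymp: "\<And>t v LA LB.
       0 \<le> t \<Longrightarrow> exp (t * (\<sigma> - l1)) < \<rho> \<Longrightarrow> unit2 v \<Longrightarrow> LB \<le> LA \<Longrightarrow> expsum t = spec2 v LA LB \<Longrightarrow>
       exp (t * l1) \<le> LA \<and> LA \<le> 2 * n * exp (t * l1) \<and>
       c / (4 * n) * exp (t * \<sigma>) \<le> LB \<and> LB \<le> 2 * n * exp (t * \<sigma>) \<and>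
       \<bar>perp u1 \<bullet> v\<bar> \<le> 4 * n * exp (t * (\<sigma> - l1))"
    using expsum_spectral_asymptotics by blast
  have "\<forall>m. \<exists>v LA LB. unit2 v \<and> LB \<le> LA \<and> expsum (real m) = spec2 v LA LB"
    using sym2_spectral[OF sym2_expsum] by metis
  then obtain V LA LB where V: "\<And>m. unit2 (V m)" "\<And>m. LB m \<le> LA m"
    "\<And>m. expsum (real m) = spec2 (V m) (LA m) (LB m)" by metis
  have Sup: "Sup_LE XX = lim (\<lambda>m. spec2 (V m) (ln (LA m) / real m) (ln (LB m) / real m))"
    unfolding Sup_LE_def expsum_def[symmetric] V(3) by (simp add: matfun_spec2[OF V(1)] scaleR_spec2)
  have r: "(\<lambda>m. exp (real m * (\<sigma> - l1))) \<longlonglongrightarrow> 0"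
    using LIMSEQ_power_zero[of "exp (\<sigma> - l1)"] sigma_less by (simp add: exp_of_nat_mult)
  have ev: "eventually (\<lambda>m. exp (real m * l1) \<le> LA m \<and> LA m \<le> 2 * n * exp (real m * l1) \<and>
       c / (4 * n) * exp (real m * \<sigma>) \<le> LB m \<and> LB m \<le> 2 * n * exp (real m * \<sigma>) \<and>
       \<bar>perp u1 \<bullet> V m\<bar> \<le> 4 * n * exp (real m * (\<sigma> - l1))) sequentially"
    using order_tendstoD(2)[OF r \<rho>]
    by eventually_elim (rule asymp[OF of_nat_0_le_iff _ V(1) V(2) V(3)])
  have "(\<lambda>m. ln (LA m) / real m) \<longlonglongrightarrow> l1"
    by (rule tendsto_ln_div_of_exp_bounds[of 1 _ _ "2 * n"]) (use ev in \<open>eventually_elim, auto\<close>)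
  moreover have "(\<lambda>m. ln (LB m) / real m) \<longlonglongrightarrow> \<sigma>"
  proof (rule tendsto_ln_div_of_exp_bounds[of "c / (4 * n)" _ _ "2 * n"])
    show "eventually (\<lambda>m. c / (4 * n) * exp (real m * \<sigma>) \<le> LB m \<and> LB m \<le> 2 * n * exp (real m * \<sigma>))
      sequentially" using ev by eventually_elim auto
  qed (use c n in simp)
  moreover have "(\<lambda>m. perp u1 \<bullet> V m) \<longlonglongrightarrow> 0"
  proof (rule Lim_null_comparison)
    show "eventually (\<lambda>m. norm (perp u1 \<bullet> V m) \<le> 4 * n * exp (real m * (\<sigma> - l1))) sequentially"
      using ev by eventually_elim auto
    show "(\<lambda>m. 4 * n * exp (real m * (\<sigma> - l1))) \<longlonglongrightarrow> 0" using tendsto_mult_right_zero[OF r] by simp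
  qed
  ultimately have "(\<lambda>m. spec2 (V m) (ln (LA m) / real m) (ln (LB m) / real m)) \<longlonglongrightarrow> spec2 u1 l1 \<sigma>"
    by (intro spec2_tendsto[OF unit_u1 V(1)])
  then show ?thesis unfolding Sup by (rule limI)
qed

lemma phi_unique_minimiser_UB_star: "phi_unique_minimiser (spec2 u1 l1 \<sigma>) (UB_star XX)"
proof (cases "\<forall>l\<in>#eigs XX. 0 \<le> l")
  case True
  then show ?thesis unfolding UB_star_def by (simp add: phi_unique_minimiser_UB_star0)
next
  case False
  define c where "c = - Min (set_mset (eigs XX))"
  define XXc where "XXc = image_mset (\<lambda>A. A + c *\<^sub>R mat 1) XX"
  interpret shifted: dominant_eigenvector XXc u1 "l1 + c" "\<sigma> + c"
    unfolding XXc_def by (rule shift)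
  have "\<forall>l\<in>#eigs XXc. 0 \<le> l"
    unfolding XXc_def eigs_shift[OF sym] c_def by auto
  then have "phi_unique_minimiser (spec2 u1 (l1 + c) (\<sigma> + c) - c *\<^sub>R mat 1)
      ((\<lambda>Y. Y - c *\<^sub>R mat 1) ` UB_star0 XXc)"
    by (intro phi_unique_minimiser_shift shifted.phi_unique_minimiser_UB_star0)
      (auto simp: psd2_def dest: shifted.UB_star0_psd2)
  moreover have "spec2 u1 (l1 + c) (\<sigma> + c) - c *\<^sub>R mat 1 = spec2 u1 l1 \<sigma>"
    by (simp add: spec2_scalar[OF unit_u1, symmetric] spec2_diff)
  moreover have "UB_star XX = (\<lambda>Y. Y - c *\<^sub>R mat 1) ` UB_star0 XXc"
    unfolding UB_star_def if_not_P[OF False] Let_def c_def XXc_def ..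
  ultimately show ?thesis by simp
qed

end

subsection \<open>Existence of a dominant eigenvector\<close>

lemma simple_top_eigenvalue:
  assumes sym: "\<forall>A\<in>#XX. sym2 A" and simple: "count (eigs XX) l1 = 1"
    and top: "\<forall>l\<in>#eigs XX. l \<le> l1"
  obtains u1 \<mu> where "unit2 u1" "spec2 u1 l1 \<mu> \<in># XX"
    "\<And>A z \<nu>. A \<in># XX \<Longrightarrow> unit2 z \<Longrightarrow> A *v z = \<nu> *\<^sub>R z \<Longrightarrow> \<nu> \<le> l1 \<and> (perp u1 \<bullet> z \<noteq> 0 \<longrightarrow> \<nu> < l1)"
proof -
  have "l1 \<in># eigs XX" using simple by (simp flip: count_greater_zero_iff)
  then obtain A1 where A1: "A1 \<in># XX" "l1 = lmax A1 \<or> l1 = lmin A1" by (rule eigs_memberE)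
  obtain u1 a b where u1: "unit2 u1" "b \<le> a" "A1 = spec2 u1 a b" using sym A1(1) sym2_spectral by metis
  obtain XX' where XX: "XX = add_mset A1 XX'" using A1(1) by (metis multi_member_split)
  have lm: "lmax A1 = a" "lmin A1 = b" using u1 by (simp_all add: lmax_spec2 lmin_spec2)
  have "a \<le> l1" using top lmax_lmin_in_eigs[OF A1(1)] lm by auto
  then have a: "a = l1" using A1(2) lm u1(2) by auto
  \<comment> \<open>simplicity of \<open>l1\<close>: it occurs neither as the other eigenvalue of \<open>A1\<close> nor in \<open>XX'\<close>\<close>
  have count: "count (eigs XX) l1 = count {#a, b#} l1 + count (eigs XX') l1" using XX lm by simp
  then have b: "b < l1" using simple a u1(2) by (cases "b = l1") auto
  have XX': "count (eigs XX') l1 = 0" using count simple a b by auto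
  have "\<nu> \<le> l1 \<and> (perp u1 \<bullet> z \<noteq> 0 \<longrightarrow> \<nu> < l1)"
    if A: "A \<in># XX" "unit2 z" "A *v z = \<nu> *\<^sub>R z" for A z \<nu>
  proof -
    have le: "\<nu> \<le> l1" using eigenvalue_in_eigs[OF sym A] top by auto
    show ?thesis
    proof (cases "A = A1")
      case True
      have "b * (perp u1 \<bullet> z) = \<nu> * (perp u1 \<bullet> z)"
        using inner_frame_spec2_mult(2)[OF u1(1), of a b z] A(3) True u1(3) by auto
      then show ?thesis using le b by auto
    next
      case False
      then have "\<nu> \<in># eigs XX'"
        using A XX sym eigenvalue_in_eigs[of XX' A z \<nu>] by auto
      then show ?thesis using le XX' by (metis count_eq_zero_iff order_less_le)
    qed
  qed
  then show ?thesis using that u1 A1(1) a by blast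
qed

lemma dominant_eigenvector_exists:
  assumes sym: "\<forall>A\<in>#XX. sym2 A" and simple: "count (eigs XX) l1 = 1"
    and top: "\<forall>l\<in>#eigs XX. l \<le> l1"
  obtains u1 \<sigma> where "dominant_eigenvector XX u1 l1 \<sigma>"
proof -
  obtain u1 \<mu> where u1: "unit2 u1" "spec2 u1 l1 \<mu> \<in># XX"
    and below: "\<And>A z \<nu>. A \<in># XX \<Longrightarrow> unit2 z \<Longrightarrow> A *v z = \<nu> *\<^sub>R z \<Longrightarrow> \<nu> \<le> l1 \<and> (perp u1 \<bullet> z \<noteq> 0 \<longrightarrow> \<nu> < l1)"
    using simple_top_eigenvalue[OF assms] by blast
  define \<Sigma> where "\<Sigma> = {\<nu>. \<exists>A\<in>#XX. \<exists>z. unit2 z \<and> A *v z = \<nu> *\<^sub>R z \<and> perp u1 \<bullet> z \<noteq> 0}"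
  have "finite \<Sigma>"
    by (rule finite_subset[of _ "set_mset (eigs XX)"]) (auto simp: \<Sigma>_def intro: eigenvalue_in_eigs[OF sym])
  moreover have "\<mu> \<in> \<Sigma>"
    unfolding \<Sigma>_def
    by (intro CollectI bexI[OF _ u1(2)] exI[of _ "perp u1"])
      (simp add: u1(1) spec2_mult_eigvec(2)[OF u1(1)] unit2_inner_self[OF u1(1)])
  ultimately have \<sigma>: "Max \<Sigma> \<in> \<Sigma>" "\<And>\<nu>. \<nu> \<in> \<Sigma> \<Longrightarrow> \<nu> \<le> Max \<Sigma>" by (auto intro: Max_in)
  have "dominant_eigenvector XX u1 l1 (Max \<Sigma>)"
  proof
    show "\<forall>A\<in>#XX. sym2 A" "unit2 u1" by (fact sym, fact u1(1))
    show "\<exists>A\<in>#XX. A *v u1 = l1 *\<^sub>R u1" using u1 spec2_mult_eigvec(1)[OF u1(1)] by blast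
    show "\<exists>A\<in>#XX. \<exists>z. unit2 z \<and> A *v z = Max \<Sigma> *\<^sub>R z \<and> perp u1 \<bullet> z \<noteq> 0" using \<sigma>(1) by (simp add: \<Sigma>_def)
    show "Max \<Sigma> < l1" using \<sigma>(1) below unfolding \<Sigma>_def by blast
    show "\<nu> \<le> l1 \<and> (perp u1 \<bullet> z \<noteq> 0 \<longrightarrow> \<nu> \<le> Max \<Sigma>)" if "A \<in># XX" "unit2 z" "A *v z = \<nu> *\<^sub>R z" for A z \<nu>
      using below[OF that] \<sigma>(2)[of \<nu>] that unfolding \<Sigma>_def by blast
  qed
  then show ?thesis by (rule that)
qed

theorem theorem4:
  fixes XX :: "mat2 multiset"
  assumes sym: "\<forall>A\<in>#XX. sym2 A"
    and hyp: "lemma7_hyp XX"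
  shows "(\<forall>A\<in>UB XX. \<forall>B\<in>UB XX. loewner_le B A \<longrightarrow> lexle (phi B) (phi A))
       \<and> (\<forall>Y1\<in>UB XX. \<forall>Y2\<in>UB XX. \<forall>\<alpha>::real. 0 \<le> \<alpha> \<and> \<alpha> \<le> 1 \<longrightarrow>
            lexle (0, 0) (\<alpha> *\<^sub>R phi Y1 + (1 - \<alpha>) *\<^sub>R phi Y2 - phi (\<alpha> *\<^sub>R Y1 + (1 - \<alpha>) *\<^sub>R Y2)))
       \<and> (Sup_LE XX \<in> UB_star XX
          \<and> (\<forall>Y\<in>UB_star XX. lexle (phi (Sup_LE XX)) (phi Y))
          \<and> (\<forall>Y\<in>UB_star XX. lexle (phi Y) (phi (Sup_LE XX)) \<longrightarrow> Y = Sup_LE XX))"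
proof -
  \<comment> \<open>of the hypotheses of Lemma 7 only the simplicity of the top eigenvalue is needed\<close>
  obtain l1 where "count (eigs XX) l1 = 1" "\<forall>l\<in>#eigs XX. l \<le> l1"
    using hyp unfolding lemma7_hyp_def by blast
  then obtain u1 \<sigma> where D: "dominant_eigenvector XX u1 l1 \<sigma>"
    using dominant_eigenvector_exists[OF sym] by blast
  have "phi_unique_minimiser (Sup_LE XX) (UB_star XX)"
    using dominant_eigenvector.Sup_LE_eq[OF D] dominant_eigenvector.phi_unique_minimiser_UB_star[OF D]
    by simp
  then show ?thesis
    unfolding phi_unique_minimiser_def UB_def using phi_loewner_mono phi_lex_convex by simp
qed

end
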